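(* Let $U\subset\mathbb{C}^n$ (or a Stein open subset of a complex manifold with global coordinates $z^1,\dots,z^n$) and $A=\Gamma(U,\mathcal{O})$. Let $\mathcal{B}^{\cdot}(A)$ be the bar resolution of $A$ and $K^{\cdot}$ the Koszul complex on $U\times U$, and let $\Phi^{\cdot}:\mathcal{B}^{\cdot}\to K^{\cdot}$ be the map defined recursively below. Then $\Phi^{\cdot}$ is a chain map ($d_K\Phi^{-q}=\Phi^{-(q-1)}\partial$ for all $q\ge1$), $\Phi^0$ induces the identity on $\mathcal{O}_{\Delta\cap (U\times U)}$, and $\Phi^{\cdot}$ is a quasi-isomorphism.
   Context: On $U\times U$ use coordinates $(z,\zeta)=(z^1,\dots,z^n,\zeta^1,\dots,\zeta^n)$, $z=p_1^*z$, $\zeta=p_2^*z$; $\Delta$ is the diagonal. Bar complex: $\mathcal{B}^{-q}(A)=A^{\otimes(q+2)}$ (tensor over $\mathbb{C}$), an $A^e=A\otimes A$-module via the first and last factors, with $A^e$-linear differential $\partial(f_0\otimes\cdots\otimes f_{q+1})=\sum_{i=0}^{q}(-1)^i f_0\otimes\cdots\otimes f_if_{i+1}\otimes\cdots\otimes f_{q+1}$; it resolves $A$. Koszul complex: $F=\bigoplus_{i=1}^n\mathcal{O}_{U\times U}e^i$, $\check e^i$ the dual basis, $K^{-q}=\Lambda^qF$ ($0\le q\le n$), with $d_K:K^{-q}\to K^{-q+1}$ the contraction with $\sum_i(z^i-\zeta^i)\check e^i$. Homotopy $P:K^{-q}\to K^{-q-1}$: for an increasing multi-index $I$ of length $|I|$,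 $P(fe^I)=\sum_{j=1}^n\Big(\int_0^1t^{|I|}\frac{\partial f}{\partial z^j}(\zeta+t(z-\zeta),\zeta)\,dt\Big)e^j\wedge e^I$. The map $\Phi^{\cdot}$ is $A^e$-linear (identifying $A^e$ with functions $f(z)g(\zeta)$), defined by $\Phi^0(f_0\otimes f_1)=f_0(z)f_1(\zeta)$ and, for $1\le q\le n$, $\Phi^{-q}(f_0\otimes\cdots\otimes f_{q+1})=f_0(z)\,\big\{P\,\Phi^{-(q-1)}\big(\partial(1\otimes f_1\otimes\cdots\otimes f_q\otimes1)\big)\big\}\,f_{q+1}(\zeta)$, and $\Phi^{-q}=0$ for $q>n$. *)

theory Defs
  imports "HOL-Analysis.Analysis"
begin

(* elements of A^{\<otimes>k}, modelled as functions on lists of k points of U *)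
type_synonym 'n tens = "(complex^'n) list \<Rightarrow> complex"
(* elements of \<Lambda>F with coefficients O(U\<times>U): coefficient of e^I, I a set of indices *)
type_synonym 'n kos = "'n set \<Rightarrow> (complex^'n) \<Rightarrow> (complex^'n) \<Rightarrow> complex"

definition holo :: "(complex^'n::finite) set \<Rightarrow> ((complex^'n) \<Rightarrow> complex) \<Rightarrow> bool" where
  "holo U f \<longleftrightarrow> (\<forall>x\<in>U. \<exists>L. (f has_derivative L) (at x) \<and>
       (\<forall>c v. L (c *s v) = c * L v))"

definition holo2 :: "(complex^'n::finite) set \<Rightarrow> ((complex^'n) \<Rightarrow> (complex^'n) \<Rightarrow> complex) \<Rightarrow> bool" where
  "holo2 U f \<longleftrightarrow> (\<forall>x\<in>U \<times> U. \<exists>L. ((\<lambda>p. f (fst p) (snd p)) has_derivative L) (at x) \<and>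
       (\<forall>c v w. L (c *s v, c *s w) = c * L (v, w)))"

text \<open>Bar complex: B^{-q}(A) = A^{\<otimes>(q+2)}, realised as the finite sums of products
  f_0(x_0)...f_{q+1}(x_{q+1}) of holomorphic functions on U^{q+2}, extended by 0 elsewhere.\<close>
definition BarSpace :: "(complex^'n::finite) set \<Rightarrow> nat \<Rightarrow> 'n tens set" where
  "BarSpace U q = {F. \<exists>(N::nat) fs. (\<forall>m<N. \<forall>i<q+2. holo U (fs m i)) \<and>
      (\<forall>xs. F xs = (if length xs = q + 2 \<and> set xs \<subseteq> U
                     then (\<Sum>m<N. \<Prod>i<q+2. fs m i (xs ! i)) else 0))}"

text \<open>Bar differential B^{-q} \<rightarrow> B^{-(q-1)}:
  f_0\<otimes>...\<otimes>f_{q+1} \<mapsto> \<Sum>_{i=0}^{q} (-1)^i f_0\<otimes>...\<otimes>f_i f_{i+1}\<otimes>...\<otimes>f_{q+1}.\<close>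
definition barD :: "(complex^'n::finite) set \<Rightarrow> nat \<Rightarrow> 'n tens \<Rightarrow> 'n tens" where
  "barD U q F = (\<lambda>xs. if length xs = q + 1 \<and> set xs \<subseteq> U
      then (\<Sum>i\<le>q. (-1) ^ i * F (take (Suc i) xs @ drop i xs)) else 0)"

definition Kos :: "(complex^'n::finite) set \<Rightarrow> nat \<Rightarrow> 'n kos set" where
  "Kos U q = {\<omega>. (\<forall>I. card I \<noteq> q \<longrightarrow> \<omega> I = (\<lambda>z \<zeta>. 0)) \<and>
      (\<forall>I z \<zeta>. (z \<notin> U \<or> \<zeta> \<notin> U) \<longrightarrow> \<omega> I z \<zeta> = 0) \<and> (\<forall>I. holo2 U (\<omega> I))}"

text \<open>sign of e^i \<and> e^I (I increasing, i \<notin> I) relative to e^{I \<union> {i}}\<close>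
definition sgnK :: "'n::linorder \<Rightarrow> 'n set \<Rightarrow> complex" where
  "sgnK i I = (-1) ^ card {l\<in>I. l < i}"

text \<open>d_K = contraction with \<Sum>_i (z^i - \<zeta>^i) e^i-dual.\<close>
definition dK :: "(complex^'n::{finite,linorder}) set \<Rightarrow> 'n kos \<Rightarrow> 'n kos" where
  "dK U \<omega> = (\<lambda>I z \<zeta>. if z \<in> U \<and> \<zeta> \<in> U then
      (\<Sum>i\<in>UNIV - I. sgnK i I * (z $ i - \<zeta> $ i) * \<omega> (insert i I) z \<zeta>) else 0)"

definition upd :: "(complex^'n::finite) \<Rightarrow> 'n \<Rightarrow> complex \<Rightarrow> (complex^'n)" where
  "upd x j w = (\<chi> k. if k = j then w else x $ k)"

definition pz :: "'n::finite \<Rightarrow> ((complex^'n) \<Rightarrow> (complex^'n) \<Rightarrow> complex) \<Rightarrow> (complex^'n) \<Rightarrow> (complex^'n) \<Rightarrow> complex" where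
  "pz j g x \<zeta> = deriv (\<lambda>w. g (upd x j w) \<zeta>) (x $ j)"

text \<open>Homotopy P: P(f e^I) = \<Sum>_j (\<integral>_0^1 t^{|I|} \<partial>f/\<partial>z^j(\<zeta>+t(z-\<zeta>),\<zeta>) dt) e^j \<and> e^I.\<close>
definition Pop :: "(complex^'n::{finite,linorder}) set \<Rightarrow> 'n kos \<Rightarrow> 'n kos" where
  "Pop U \<omega> = (\<lambda>J z \<zeta>. if z \<in> U \<and> \<zeta> \<in> U then
      (\<Sum>j\<in>J. sgnK j (J - {j}) *
         integral {0..1::real} (\<lambda>t. complex_of_real (t ^ (card J - 1)) *
             pz j (\<omega> (J - {j})) (\<zeta> + t *\<^sub>R (z - \<zeta>)) \<zeta>)) else 0)"

text \<open>For q \<ge> 1, \<Phi>^{-q}(F)(z,\<zeta>) is P\<Phi>^{-(q-1)}\<partial> applied to the slice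
  x \<mapsto> F(a, x_1..x_q, b) (i.e. 1\<otimes>f_1\<otimes>..\<otimes>f_q\<otimes>1 weighted by f_0(a) f_{q+1}(b)), evaluated
  at a = z, b = \<zeta>; this is the A^e-linear extension of the recursive formula.\<close>
primrec Phi :: "(complex^'n::{finite,linorder}) set \<Rightarrow> nat \<Rightarrow> 'n tens \<Rightarrow> 'n kos" where
  "Phi U 0 F = (\<lambda>I z \<zeta>. if I = {} \<and> z \<in> U \<and> \<zeta> \<in> U then F [z, \<zeta>] else 0)"
| "Phi U (Suc q) F = (\<lambda>I z \<zeta>. if Suc q \<le> CARD('n) \<and> z \<in> U \<and> \<zeta> \<in> U then
      Pop U (Phi U q (barD U (Suc q) (\<lambda>xs. F (z # take (Suc q) (tl xs) @ [\<zeta>])))) I z \<zeta>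
    else 0)"

end

theory Submission
  imports Defs "HOL-Complex_Analysis.Cauchy_Integral_Formula"
begin

text \<open>Both complexes resolve the diagonal. The bar complex is contracted by \<open>F \<mapsto> F \<otimes> 1\<close>, so
  every bar cycle of positive degree is a boundary. On the convex set \<open>U\<close> the operator \<open>P\<close>
  satisfies \<open>d\<^sub>K P + P d\<^sub>K = id\<close> in negative degrees and \<open>= id - (restriction to the diagonal)\<close>
  in degree 0, because the integrand of the left-hand side along the segment from \<open>(\<zeta>, \<zeta>)\<close> to
  \<open>(z, \<zeta>)\<close> is the derivative of \<open>t \<mapsto> t\<^sup>q \<omega>(\<zeta> + t (z - \<zeta>), \<zeta>)\<close>. Hence every Koszul cycle is
  \<open>d\<^sub>K P \<omega>\<close> in negative degree, and in degree 0 it differs by \<open>d\<^sub>K P \<omega>\<close> from \<open>\<Phi>\<close> of the bar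
  0-chain \<open>1 \<otimes> \<omega>|\<^sub>\<Delta>\<close>. The same formula shows that \<open>\<Phi>\<close> is a chain map, since \<open>\<Phi>\<close> sends
  bar boundaries to Koszul cycles. That \<open>\<Phi>\<close> takes values in holomorphic forms rests on
  differentiation under the integral sign, for which the derivatives of holomorphic functions
  must be continuous; this follows from the Cauchy estimates on complex lines.\<close>

section \<open>Holomorphic functions of two points\<close>

lemma holomorphic_on_ball_of_field_derivs:
  fixes \<phi> :: "complex \<Rightarrow> complex"
  assumes "\<And>w. norm w \<le> r \<Longrightarrow> (\<phi> has_field_derivative \<phi>' w) (at w)"
  shows "\<phi> holomorphic_on ball 0 r" and "continuous_on (cball 0 r) \<phi>"
proof -
  show "\<phi> holomorphic_on ball 0 r"
    unfolding holomorphic_on_def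
    using assms field_differentiable_at_within field_differentiable_def
    by (metis dist_0_norm less_le mem_ball)
  show "continuous_on (cball 0 r) \<phi>"
    by (rule continuous_at_imp_continuous_on) (metis assms DERIV_isCont dist_0_norm mem_cball)
qed

lemma norm_field_deriv0_le:
  fixes \<phi> :: "complex \<Rightarrow> complex"
  assumes r: "r > 0" and der: "\<And>w. norm w \<le> r \<Longrightarrow> (\<phi> has_field_derivative \<phi>' w) (at w)"
    and bound: "\<And>w. norm w = r \<Longrightarrow> norm (\<phi> w) \<le> B"
  shows "norm (\<phi>' 0) \<le> B / r"
proof -
  have "norm (\<phi> w) \<le> B" if "norm (0 - w) = r" for w
    using bound that by simp
  then have "norm ((deriv ^^ 1) \<phi> 0) \<le> fact 1 * B / r ^ 1"
    by (intro Cauchy_inequality holomorphic_on_ball_of_field_derivs[OF der] r)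
  moreover have "deriv \<phi> 0 = \<phi>' 0"
    using DERIV_imp_deriv[OF der[of 0]] r by simp
  ultimately show ?thesis by simp
qed

lemma has_integral_field_deriv0_circlepath:
  fixes \<phi> :: "complex \<Rightarrow> complex"
  assumes R: "R > 0" and der: "\<And>w. norm w \<le> R \<Longrightarrow> (\<phi> has_field_derivative \<phi>' w) (at w)"
  shows "((\<lambda>t. \<phi> (circlepath 0 R t) / circlepath 0 R t) has_integral \<phi>' 0) {0..1}"
proof -
  note hol = holomorphic_on_ball_of_field_derivs[OF der]
  have "((\<lambda>u. \<phi> u / (u - 0) ^ Suc 1) has_contour_integral
      (2 * pi * \<i>) / fact 1 * (deriv ^^ 1) \<phi> 0) (circlepath 0 R)"
    by (rule Cauchy_has_contour_integral_higher_derivative_circlepath[OF hol(2,1)]) (use R in auto)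
  moreover have "deriv \<phi> 0 = \<phi>' 0"
    using DERIV_imp_deriv[OF der[of 0]] R by simp
  ultimately have integral: "((\<lambda>t. \<phi> (circlepath 0 R t) / (circlepath 0 R t)\<^sup>2 *
      vector_derivative (circlepath 0 R) (at t within {0..1})) has_integral 2 * pi * \<i> * \<phi>' 0) {0..1}"
    unfolding has_contour_integral_def by (simp add: power2_eq_square)
  have integrand: "\<phi> (circlepath 0 R t) / (circlepath 0 R t)\<^sup>2 *
      vector_derivative (circlepath 0 R) (at t within {0..1}) =
      2 * pi * \<i> * (\<phi> (circlepath 0 R t) / circlepath 0 R t)" if "t \<in> {0..1}" for t
  proof -
    have "vector_derivative (circlepath 0 R) (at t within {0..1}) =
        2 * pi * \<i> * R * exp (2 * of_real pi * \<i> * t)"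
      using that by (simp add: vector_derivative_circlepath01)
    also have "\<dots> = 2 * pi * \<i> * circlepath 0 R t" by (simp add: circlepath)
    finally have "vector_derivative (circlepath 0 R) (at t within {0..1}) = 2 * pi * \<i> * circlepath 0 R t" .
    moreover have "circlepath 0 R t \<noteq> 0" using R by (simp add: circlepath)
    ultimately show ?thesis by (simp add: power2_eq_square)
  qed
  have "((\<lambda>t. 2 * pi * \<i> * (\<phi> (circlepath 0 R t) / circlepath 0 R t)) has_integral
      2 * pi * \<i> * \<phi>' 0) {0..1}"
    by (rule has_integral_eq[OF integrand integral])
  then show ?thesis by (subst (asm) has_integral_mult_right_iff) simp_all
qed

definition pair_scale :: "complex \<Rightarrow> (complex^'n::finite) \<times> (complex^'n) \<Rightarrow> (complex^'n) \<times> (complex^'n)"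
  where "pair_scale c p = (c *s fst p, c *s snd p)"

lemma norm_vector_scalar_mult: "norm (c *s (v::complex^'n::finite)) = norm c * norm v"
  unfolding norm_vec_def by (simp add: L2_set_right_distrib norm_mult)

lemma norm_pair_scale: "norm (pair_scale c p) = norm c * norm p"
  by (simp add: pair_scale_def norm_prod_def norm_vector_scalar_mult power_mult_distrib
      distrib_left[symmetric] real_sqrt_mult)

lemma pair_scale_0_left [simp]: "pair_scale 0 p = 0"
  by (simp add: pair_scale_def zero_prod_def)

lemma bounded_linear_pair_scale_left: "bounded_linear (\<lambda>c. pair_scale c e)"
proof (rule bounded_linear_intro[where K="norm e"])
  show "pair_scale (a + b) e = pair_scale a e + pair_scale b e" for a b
    by (simp add: pair_scale_def vector_sadd_rdistrib)
  show "pair_scale (r *\<^sub>R a) e = r *\<^sub>R pair_scale a e" for r a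
    by (simp add: pair_scale_def vec_eq_iff prod_eq_iff; simp add: scaleR_conv_of_real)
qed (simp add: norm_pair_scale)

definition holo_pairs ::
    "((complex^'n::finite) \<times> (complex^'n)) set \<Rightarrow> ((complex^'n) \<times> (complex^'n) \<Rightarrow> complex) \<Rightarrow> bool"
  where "holo_pairs S g \<longleftrightarrow>
    (\<forall>p\<in>S. \<exists>L. (g has_derivative L) (at p) \<and> (\<forall>c u. L (pair_scale c u) = c * L u))"

abbreviation FD :: "('a::real_normed_vector \<Rightarrow> 'b::real_normed_vector) \<Rightarrow> 'a \<Rightarrow> 'a \<Rightarrow> 'b"
  where "FD g p \<equiv> frechet_derivative g (at p)"

lemma holo2_iff_holo_pairs: "holo2 U f \<longleftrightarrow> holo_pairs (U \<times> U) (case_prod f)"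
  unfolding holo2_def holo_pairs_def pair_scale_def case_prod_unfold
  by (simp add: split_paired_All)

lemma
  assumes "holo_pairs S g" "p \<in> S"
  shows holo_pairs_has_FD: "(g has_derivative FD g p) (at p)"
    and holo_pairs_FD_pair_scale: "\<And>c u. FD g p (pair_scale c u) = c * FD g p u"
    and holo_pairs_bounded_linear_FD: "bounded_linear (FD g p)"
proof -
  obtain L where L: "(g has_derivative L) (at p)" "\<And>c u. L (pair_scale c u) = c * L u"
    using assms unfolding holo_pairs_def by blast
  moreover have "L = FD g p" using L(1) frechet_derivative_at by blast
  ultimately show "(g has_derivative FD g p) (at p)" "\<And>c u. FD g p (pair_scale c u) = c * FD g p u"
    "bounded_linear (FD g p)" using has_derivative_bounded_linear by blast+
qed

lemma holo_pairs_continuous_on: "holo_pairs S g \<Longrightarrow> continuous_on S g"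
  by (rule continuous_at_imp_continuous_on)
     (use holo_pairs_has_FD has_derivative_continuous in blast)

lemma holo_pairs_transform:
  assumes "holo_pairs S g" "open S" "\<And>x. x \<in> S \<Longrightarrow> g x = h x"
  shows "holo_pairs S h"
  using assms unfolding holo_pairs_def by (meson has_derivative_transform_within_open)

lemma holo_pairs_complex_line:
  assumes "holo_pairs S g" "x + pair_scale w0 e \<in> S"
  shows "((\<lambda>w. g (x + pair_scale w e)) has_field_derivative FD g (x + pair_scale w0 e) e) (at w0)"
proof -
  have line: "((\<lambda>w. x + pair_scale w e) has_derivative (\<lambda>h. pair_scale h e)) (at w0)"
    using has_derivative_add[OF has_derivative_const
        bounded_linear_imp_has_derivative[OF bounded_linear_pair_scale_left]]
    by simp
  have "((g \<circ> (\<lambda>w. x + pair_scale w e)) has_derivative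
      (FD g (x + pair_scale w0 e) \<circ> (\<lambda>h. pair_scale h e))) (at w0)"
    by (rule diff_chain_at[OF line holo_pairs_has_FD[OF assms]])
  moreover have "FD g (x + pair_scale w0 e) \<circ> (\<lambda>h. pair_scale h e) = (*) (FD g (x + pair_scale w0 e) e)"
    using holo_pairs_FD_pair_scale[OF assms] by (auto simp: fun_eq_iff mult.commute)
  ultimately show ?thesis unfolding has_field_derivative_def o_def by simp
qed

lemma has_integral_FD_circlepath:
  assumes "holo_pairs S g" "R > 0" "\<And>w. norm w \<le> R \<Longrightarrow> x + pair_scale w e \<in> S"
  shows "((\<lambda>t. g (x + pair_scale (circlepath 0 R t) e) / circlepath 0 R t) has_integral FD g x e) {0..1}"
  using has_integral_field_deriv0_circlepath[OF assms(2) holo_pairs_complex_line[OF assms(1,3)]]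
  by simp

lemma norm_Blinfun_le_unit:
  assumes "bounded_linear f" "0 \<le> b" "\<And>v. norm v = 1 \<Longrightarrow> norm (f v) \<le> b"
  shows "norm (Blinfun f) \<le> b"
proof (rule norm_blinfun_bound[OF assms(2)])
  fix u
  show "norm (blinfun_apply (Blinfun f) u) \<le> b * norm u"
  proof (cases "u = 0")
    case True then show ?thesis using assms(1) by (simp add: bounded_linear_Blinfun_apply linear_simps)
  next
    case False
    have "f u = norm u *\<^sub>R f ((1 / norm u) *\<^sub>R u)"
      using False by (simp add: linear_cmul[OF bounded_linear.linear[OF assms(1)]])
    then show ?thesis
      using assms(3)[of "(1 / norm u) *\<^sub>R u"] False
      by (simp add: bounded_linear_Blinfun_apply[OF assms(1)] mult.commute mult_left_mono)
  qed
qed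

lemma norm_FD_diff_le:
  assumes g: "holo_pairs S g" and r: "r > 0" "cball p (2 * r) \<subseteq> S"
    and y: "dist y p < r" and v: "norm v = 1"
    and osc: "\<And>x x'. x \<in> cball p (2 * r) \<Longrightarrow> x' \<in> cball p (2 * r) \<Longrightarrow> dist x' x = dist y p \<Longrightarrow>
      dist (g x') (g x) \<le> B"
  shows "norm (FD g y v - FD g p v) \<le> B / r"
proof -
  have near: "y + pair_scale w v \<in> cball p (2 * r)" "p + pair_scale w v \<in> cball p (2 * r)"
    if "norm w \<le> r" for w
  proof -
    have "dist p (y + pair_scale w v) \<le> dist p y + norm (pair_scale w v)"
      by (metis dist_commute dist_norm dist_triangle2 add_diff_cancel_left')
    then show "y + pair_scale w v \<in> cball p (2 * r)"
      using y that v by (auto simp: norm_pair_scale dist_commute)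
    show "p + pair_scale w v \<in> cball p (2 * r)"
      using that v r by (auto simp: norm_pair_scale dist_norm)
  qed
  have "((\<lambda>w. g (y + pair_scale w v) - g (p + pair_scale w v)) has_field_derivative
      FD g (y + pair_scale w v) v - FD g (p + pair_scale w v) v) (at w)" if "norm w \<le> r" for w
    using near[OF that] r(2) by (intro DERIV_diff holo_pairs_complex_line[OF g]) auto
  moreover have "norm (g (y + pair_scale w v) - g (p + pair_scale w v)) \<le> B" if "norm w = r" for w
    using osc[of "p + pair_scale w v" "y + pair_scale w v"] near that by (simp add: dist_norm)
  ultimately show ?thesis using norm_field_deriv0_le[OF r(1)] by fastforce
qed

text \<open>By the Cauchy estimate on complex lines, the derivatives at nearby points are close because
  the function values around them are uniformly close.\<close>
lemma continuous_on_Blinfun_FD: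
  assumes S: "open S" and g: "holo_pairs S g"
  shows "continuous_on S (\<lambda>p. Blinfun (FD g p))"
  unfolding continuous_on_eq_continuous_at[OF S] continuous_at_eps_delta
proof (intro ballI allI impI)
  fix p \<epsilon> assume p: "p \<in> S" and \<epsilon>: "(\<epsilon>::real) > 0"
  obtain r where r: "r > 0" "cball p (2 * r) \<subseteq> S"
    using open_contains_cball[of S] S p by (metis field_sum_of_halves half_gt_zero mult_2)
  have "uniformly_continuous_on (cball p (2 * r)) g"
    by (intro compact_uniformly_continuous compact_cball
        continuous_on_subset[OF holo_pairs_continuous_on[OF g] r(2)])
  then obtain \<delta> where \<delta>: "\<delta> > 0" and ucont: "\<And>x x'. x \<in> cball p (2 * r) \<Longrightarrow> x' \<in> cball p (2 * r) \<Longrightarrow>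
      dist x' x < \<delta> \<Longrightarrow> dist (g x') (g x) < \<epsilon> * r / 2"
    unfolding uniformly_continuous_on_def using \<epsilon> r by (metis half_gt_zero mult_pos_pos)
  show "\<exists>d>0. \<forall>y. dist y p < d \<longrightarrow> dist (Blinfun (FD g y)) (Blinfun (FD g p)) < \<epsilon>"
  proof (intro exI[of _ "min \<delta> r"] conjI allI impI)
    fix y assume y: "dist y p < min \<delta> r"
    have "norm (FD g y v - FD g p v) \<le> \<epsilon> * r / 2 / r" if "norm v = 1" for v
      using y ucont by (intro norm_FD_diff_le[OF g r _ that]) (auto intro: less_imp_le)
    then have unit: "norm (FD g y v - FD g p v) \<le> \<epsilon> / 2" if "norm v = 1" for v
      using that r(1) by simp
    have "y \<in> cball p (2 * r)" using y r(1) by (simp add: dist_commute)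
    then have bl: "bounded_linear (FD g y)" "bounded_linear (FD g p)"
      using holo_pairs_bounded_linear_FD[OF g] r(2) p by blast+
    then have "Blinfun (FD g y) - Blinfun (FD g p) = Blinfun (\<lambda>u. FD g y u - FD g p u)"
      by (intro blinfun_eqI)
         (simp add: blinfun.diff_left bounded_linear_Blinfun_apply bounded_linear_sub)
    moreover have "norm (Blinfun (\<lambda>u. FD g y u - FD g p u)) \<le> \<epsilon> / 2"
      using \<epsilon> unit by (intro norm_Blinfun_le_unit bounded_linear_sub bl) auto
    ultimately show "dist (Blinfun (FD g y)) (Blinfun (FD g p)) < \<epsilon>"
      using \<epsilon> by (simp add: dist_norm)
  qed (use \<delta> r in simp)
qed

lemma holo_pairs_parameter_integral:
  fixes f :: "(complex^'n::finite) \<times> (complex^'n) \<Rightarrow> real \<Rightarrow> complex"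
  assumes V: "open V" "convex V"
    and der: "\<And>x t. x \<in> V \<Longrightarrow> t \<in> cbox 0 1 \<Longrightarrow> ((\<lambda>x. f x t) has_derivative blinfun_apply (fx x t)) (at x)"
    and lin: "\<And>x t c u. x \<in> V \<Longrightarrow> t \<in> cbox 0 1 \<Longrightarrow> blinfun_apply (fx x t) (pair_scale c u) = c * blinfun_apply (fx x t) u"
    and int: "\<And>x. x \<in> V \<Longrightarrow> f x integrable_on cbox 0 1"
    and cont: "continuous_on (V \<times> cbox 0 1) (\<lambda>(x, t). fx x t)"
  shows "holo_pairs V (\<lambda>x. integral (cbox 0 1) (f x))"
  unfolding holo_pairs_def
proof
  fix p assume p: "p \<in> V"
  have "((\<lambda>x. integral (cbox 0 1) (f x)) has_derivative blinfun_apply (integral (cbox 0 1) (fx p))) (at p within V)"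
    by (rule leibniz_rule[OF has_derivative_at_withinI[OF der] int cont p V(2)])
  then have D: "((\<lambda>x. integral (cbox 0 1) (f x)) has_derivative blinfun_apply (integral (cbox 0 1) (fx p))) (at p)"
    unfolding at_within_open[OF p V(1)] .
  have "continuous_on (cbox 0 1) (\<lambda>t. (p, t))" by (intro continuous_intros)
  then have "continuous_on (cbox 0 1) (\<lambda>t. case (p, t) of (x, t) \<Rightarrow> fx x t)"
    by (rule continuous_on_compose2[OF cont]) (use p in auto)
  then have "continuous_on (cbox 0 1) (fx p)" by simp
  then have "blinfun_apply (integral (cbox 0 1) (fx p)) v = integral (cbox 0 1) (\<lambda>t. blinfun_apply (fx p t) v)" for v
    using blinfun_apply_integral[OF integrable_continuous] by blast
  moreover have "integral (cbox 0 1) (\<lambda>t. blinfun_apply (fx p t) (pair_scale c u)) =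
      c * integral (cbox 0 1) (\<lambda>t. blinfun_apply (fx p t) u)" for c u
    by (subst integral_cong[OF lin[OF p]]) simp_all
  ultimately show "\<exists>L. ((\<lambda>x. integral (cbox 0 1) (f x)) has_derivative L) (at p) \<and>
      (\<forall>c u. L (pair_scale c u) = c * L u)"
    using D by metis
qed

lemma open_contains_ball_plus_disc:
  assumes "open S" "p \<in> S"
  obtains r R where "r > 0" "R > 0" "\<And>x w. x \<in> ball p r \<Longrightarrow> norm w \<le> R \<Longrightarrow> x + pair_scale w e \<in> S"
proof -
  obtain \<rho> where \<rho>: "\<rho> > 0" "cball p \<rho> \<subseteq> S" using assms open_contains_cball by blast
  have ne: "norm e + 1 > 0" by (simp add: add_nonneg_pos)
  define R where "R = \<rho> / (2 * (norm e + 1))"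
  have R: "R > 0" unfolding R_def using \<rho>(1) ne by simp
  have "x + pair_scale w e \<in> S" if x: "x \<in> ball p (\<rho> / 2)" and w: "norm w \<le> R" for x w
  proof -
    have "norm w * norm e \<le> R * (norm e + 1)" using w R by (intro mult_mono) auto
    also have "\<dots> = \<rho> / 2" using ne unfolding R_def
      by (metis mult.commute nonzero_mult_divide_mult_cancel_left2 times_divide_eq_right less_irrefl)
    finally have small: "norm (pair_scale w e) \<le> \<rho> / 2" by (simp add: norm_pair_scale)
    have "dist p (x + pair_scale w e) \<le> dist p x + norm (pair_scale w e)"
      by (metis dist_commute dist_norm dist_triangle2 add_diff_cancel_left')
    then show ?thesis using x small \<rho>(2) by auto
  qed
  then show ?thesis using that[of "\<rho> / 2" R] \<rho>(1) R by auto
qed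

lemma continuous_on_FD_circle:
  assumes S: "open S" and g: "holo_pairs S g"
    and inS: "\<And>x t. x \<in> V \<Longrightarrow> x + pair_scale (circlepath 0 R t) e \<in> S"
  shows "continuous_on (V \<times> cbox 0 1) (\<lambda>(x, t). Blinfun (FD g (x + pair_scale (circlepath 0 R t) e)))"
proof -
  have "continuous_on (V \<times> cbox 0 1) (\<lambda>(x, t). x + pair_scale (circlepath 0 R t) e)"
    unfolding case_prod_beta
    by (intro continuous_intros continuous_on_compose2[OF linear_continuous_on[OF bounded_linear_pair_scale_left]])
       (auto simp: circlepath intro!: continuous_intros)
  moreover have "(\<lambda>(x, t). x + pair_scale (circlepath 0 R t) e) ` (V \<times> cbox 0 1) \<subseteq> S"
    using inS by auto
  ultimately show ?thesis
    using continuous_on_compose2[OF continuous_on_Blinfun_FD[OF S g]] by (simp add: case_prod_beta)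
qed

lemma holo_pairs_circle_integral:
  assumes S: "open S" and g: "holo_pairs S g" and V: "open V" "convex V" and R: "R > 0"
    and inS: "\<And>x w. x \<in> V \<Longrightarrow> norm w \<le> R \<Longrightarrow> x + pair_scale w e \<in> S"
  shows "holo_pairs V (\<lambda>x. integral (cbox 0 1) (\<lambda>t. g (x + pair_scale (circlepath 0 R t) e) / circlepath 0 R t))"
proof -
  define \<gamma> where "\<gamma> = circlepath 0 R"
  have \<gamma>S: "x + pair_scale (\<gamma> t) e \<in> S" if "x \<in> V" for x t
    using inS[OF that] R by (simp add: \<gamma>_def circlepath norm_mult)
  define fx where "fx x t = blinfun_mult_left (inverse (\<gamma> t)) o\<^sub>L Blinfun (FD g (x + pair_scale (\<gamma> t) e))"
    for x t
  have fx_apply: "blinfun_apply (fx x t) = (\<lambda>h. FD g (x + pair_scale (\<gamma> t) e) h / \<gamma> t)" if "x \<in> V" for x t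
    using holo_pairs_bounded_linear_FD[OF g \<gamma>S[OF that]]
    by (simp add: fx_def fun_eq_iff bounded_linear_Blinfun_apply divide_inverse)
  have "holo_pairs V (\<lambda>x. integral (cbox 0 1) (\<lambda>t. g (x + pair_scale (\<gamma> t) e) / \<gamma> t))"
  proof (rule holo_pairs_parameter_integral[OF V])
    show "((\<lambda>x. g (x + pair_scale (\<gamma> t) e) / \<gamma> t) has_derivative blinfun_apply (fx x t)) (at x)"
      if "x \<in> V" for x t
    proof -
      have shift: "((\<lambda>x. x + pair_scale (\<gamma> t) e) has_derivative (\<lambda>h. h)) (at x)"
        by (intro derivative_eq_intros) auto
      have "((g \<circ> (\<lambda>x. x + pair_scale (\<gamma> t) e)) has_derivative (FD g (x + pair_scale (\<gamma> t) e) \<circ> (\<lambda>h. h))) (at x)"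
        by (rule diff_chain_at[OF shift holo_pairs_has_FD[OF g \<gamma>S[where t=t, OF that]]])
      then show ?thesis
        unfolding fx_apply[OF that] o_def by (rule bounded_linear.has_derivative[OF bounded_linear_divide])
    qed
    show "blinfun_apply (fx x t) (pair_scale c u) = c * blinfun_apply (fx x t) u" if "x \<in> V" for x t c u
      using holo_pairs_FD_pair_scale[OF g \<gamma>S[OF that]] by (simp add: fx_apply[OF that])
    show "(\<lambda>t. g (x + pair_scale (\<gamma> t) e) / \<gamma> t) integrable_on cbox 0 1" if "x \<in> V" for x
      using has_integral_FD_circlepath[OF g R inS[OF that]] unfolding \<gamma>_def interval_cbox
      by (rule has_integral_integrable)
    have "continuous_on (V \<times> cbox 0 1) (\<lambda>(x, t). Blinfun (FD g (x + pair_scale (\<gamma> t) e)))"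
      unfolding \<gamma>_def using \<gamma>S[unfolded \<gamma>_def] by (rule continuous_on_FD_circle[OF S g])
    moreover have "continuous_on (V \<times> cbox 0 1) (\<lambda>(x, t). blinfun_mult_left (inverse (\<gamma> t)))"
      unfolding case_prod_beta \<gamma>_def
      by (intro continuous_on_compose2[OF linear_continuous_on[OF bounded_linear_blinfun_mult_left]] continuous_intros)
         (use R in \<open>auto simp: circlepath intro!: continuous_intros\<close>)
    ultimately show "continuous_on (V \<times> cbox 0 1) (\<lambda>(x, t). fx x t)"
      using bounded_bilinear.continuous_on[OF bounded_bilinear_blinfun_compose] by (simp add: fx_def case_prod_beta)
  qed
  then show ?thesis by (simp add: \<gamma>_def)
qed

text \<open>The directional derivative is a Cauchy integral over a circle in the complex line
  through the point, and that integral depends holomorphically on the point.\<close>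
lemma holo_pairs_FD_dir:
  assumes S: "open S" and g: "holo_pairs S g"
  shows "holo_pairs S (\<lambda>p. FD g p e)"
  unfolding holo_pairs_def
proof
  fix p assume p: "p \<in> S"
  obtain r R where r: "r > 0" and R: "R > 0"
    and inS: "\<And>x w. x \<in> ball p r \<Longrightarrow> norm w \<le> R \<Longrightarrow> x + pair_scale w e \<in> S"
    using open_contains_ball_plus_disc[OF S p] by blast
  have "holo_pairs (ball p r)
      (\<lambda>x. integral (cbox 0 1) (\<lambda>t. g (x + pair_scale (circlepath 0 R t) e) / circlepath 0 R t))"
    by (rule holo_pairs_circle_integral[OF S g _ _ R inS]) auto
  moreover have "integral (cbox 0 1) (\<lambda>t. g (x + pair_scale (circlepath 0 R t) e) / circlepath 0 R t) = FD g x e"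
    if "x \<in> ball p r" for x
    using has_integral_FD_circlepath[OF g R inS[OF that]] unfolding interval_cbox by (rule integral_unique)
  ultimately have "holo_pairs (ball p r) (\<lambda>x. FD g x e)"
    by (auto intro: holo_pairs_transform[where S="ball p r"])
  then show "\<exists>L. ((\<lambda>p. FD g p e) has_derivative L) (at p) \<and> (\<forall>c u. L (pair_scale c u) = c * L u)"
    using r unfolding holo_pairs_def by simp
qed

lemma convex_segment_point:
  assumes "convex U" "z \<in> U" "\<zeta> \<in> U" "t \<in> {0..1}"
  shows "\<zeta> + t *\<^sub>R (z - \<zeta>) \<in> U"
proof -
  have "(1 - t) *\<^sub>R \<zeta> + t *\<^sub>R z \<in> U"
    using assms unfolding convex_def by auto
  moreover have "(1 - t) *\<^sub>R \<zeta> + t *\<^sub>R z = \<zeta> + t *\<^sub>R (z - \<zeta>)" by (simp add: algebra_simps)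
  ultimately show ?thesis by simp
qed

text \<open>The substitution in the integrand of \<open>Pop\<close>, as a bounded linear map.\<close>
definition segment_map :: "real \<Rightarrow> ((complex^'n::finite) \<times> (complex^'n)) \<Rightarrow>\<^sub>L ((complex^'n) \<times> (complex^'n))"
  where "segment_map t = Blinfun (\<lambda>p. (snd p + t *\<^sub>R (fst p - snd p), snd p))"

lemma segment_map_apply:
  fixes p :: "(complex^'n::finite) \<times> (complex^'n)"
  shows "blinfun_apply (segment_map t) p = (snd p + t *\<^sub>R (fst p - snd p), snd p)"
proof -
  have "bounded_linear (\<lambda>p::(complex^'n) \<times> (complex^'n). (snd p + t *\<^sub>R (fst p - snd p), snd p))"
    by (intro bounded_linear_Pair bounded_linear_add bounded_linear_snd
        bounded_linear_compose[OF bounded_linear_scaleR_right] bounded_linear_sub bounded_linear_fst)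
  from bounded_linear_Blinfun_apply[OF this] show ?thesis by (simp add: segment_map_def)
qed

lemma segment_map_pair_scale: "blinfun_apply (segment_map t) (pair_scale c p) = pair_scale c (segment_map t p)"
  by (simp add: segment_map_apply pair_scale_def vector_add_ldistrib vector_ssub_ldistrib vec_eq_iff algebra_simps)

lemma segment_map_in_Times:
  "convex U \<Longrightarrow> p \<in> U \<times> U \<Longrightarrow> t \<in> {0..1} \<Longrightarrow> blinfun_apply (segment_map t) p \<in> U \<times> U"
  by (auto simp: segment_map_apply mem_Times_iff convex_segment_point)

lemma continuous_on_segment_map:
  "continuous_on A (segment_map :: real \<Rightarrow> ((complex^'n::finite) \<times> (complex^'n)) \<Rightarrow>\<^sub>L _)"
proof -
  define A0 :: "((complex^'n) \<times> (complex^'n)) \<Rightarrow>\<^sub>L ((complex^'n) \<times> (complex^'n))"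
    where "A0 = Blinfun (\<lambda>p. (snd p, snd p))"
  define B0 :: "((complex^'n) \<times> (complex^'n)) \<Rightarrow>\<^sub>L ((complex^'n) \<times> (complex^'n))"
    where "B0 = Blinfun (\<lambda>p. (fst p - snd p, 0))"
  have "segment_map t = A0 + t *\<^sub>R B0" for t
    by (intro blinfun_eqI)
       (simp add: segment_map_apply A0_def B0_def bounded_linear_Blinfun_apply bounded_linear_Pair
         bounded_linear_snd bounded_linear_fst bounded_linear_sub bounded_linear_zero
         plus_blinfun.rep_eq scaleR_blinfun.rep_eq)
  then have e: "segment_map = (\<lambda>t. A0 + t *\<^sub>R B0)" by auto
  show ?thesis unfolding e by (intro continuous_intros)
qed

lemma continuous_on_FD_segment_map:
  assumes U: "open U" "convex U" and h: "holo_pairs (U \<times> U) h"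
  shows "continuous_on ((U \<times> U) \<times> cbox 0 1) (\<lambda>(x, t). Blinfun (FD h (segment_map t x)))"
proof -
  have "continuous_on ((U \<times> U) \<times> cbox 0 1) (\<lambda>(x, t). blinfun_apply (segment_map t) x)"
    unfolding case_prod_beta by (intro continuous_intros continuous_on_compose2[OF continuous_on_segment_map]) auto
  moreover have "(\<lambda>(x, t). blinfun_apply (segment_map t) x) ` ((U \<times> U) \<times> cbox 0 1) \<subseteq> U \<times> U"
  proof (rule image_subsetI)
    fix y :: "_ \<times> real" assume "y \<in> (U \<times> U) \<times> cbox 0 1"
    then show "(case y of (x, t) \<Rightarrow> blinfun_apply (segment_map t) x) \<in> U \<times> U"
      using segment_map_in_Times[OF U(2)] by (cases y) simp
  qed
  moreover have "open (U \<times> U)" using U(1) by (simp add: open_Times)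
  ultimately show ?thesis
    using continuous_on_compose2[OF continuous_on_Blinfun_FD[OF _ h]] by (simp add: case_prod_beta)
qed

lemma holo_pairs_segment_integral:
  assumes U: "open U" "convex U" and h: "holo_pairs (U \<times> U) h"
  shows "holo_pairs (U \<times> U)
    (\<lambda>p. integral {0..1} (\<lambda>t. of_real (t ^ k) * h (snd p + t *\<^sub>R (fst p - snd p), snd p)))"
proof -
  define fx where "fx x t = (t ^ k) *\<^sub>R (Blinfun (FD h (segment_map t x)) o\<^sub>L segment_map t)" for x t
  have inUU: "blinfun_apply (segment_map t) x \<in> U \<times> U" if "x \<in> U \<times> U" "t \<in> cbox 0 1" for x t
    using segment_map_in_Times[OF U(2) that(1)] that(2) by simp
  have fx_apply: "blinfun_apply (fx x t) v = of_real (t ^ k) * FD h (segment_map t x) (segment_map t v)"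
    if "x \<in> U \<times> U" "t \<in> cbox 0 1" for x t v
    using holo_pairs_bounded_linear_FD[OF h inUU[OF that]]
    by (simp add: fx_def bounded_linear_Blinfun_apply scaleR_conv_of_real scaleR_blinfun.rep_eq)
  have "holo_pairs (U \<times> U) (\<lambda>x. integral (cbox 0 1) (\<lambda>t. of_real (t ^ k) * h (segment_map t x)))"
  proof (rule holo_pairs_parameter_integral)
    show "open (U \<times> U)" "convex (U \<times> U)" using U by (auto simp: open_Times convex_Times)
    show "((\<lambda>x. of_real (t ^ k) * h (segment_map t x)) has_derivative blinfun_apply (fx x t)) (at x)"
      if "x \<in> U \<times> U" "t \<in> cbox 0 1" for x t
    proof -
      have lin: "(blinfun_apply (segment_map t) has_derivative blinfun_apply (segment_map t)) (at x)"
        by (rule bounded_linear_imp_has_derivative[OF blinfun.bounded_linear_right])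
      have "((h \<circ> blinfun_apply (segment_map t)) has_derivative
          (FD h (segment_map t x) \<circ> blinfun_apply (segment_map t))) (at x)"
        by (rule diff_chain_at[OF lin holo_pairs_has_FD[OF h inUU[OF that]]])
      then show ?thesis
        unfolding fx_apply[OF that, abs_def] o_def by (rule has_derivative_mult_right)
    qed
    show "blinfun_apply (fx x t) (pair_scale c u) = c * blinfun_apply (fx x t) u"
      if "x \<in> U \<times> U" "t \<in> cbox 0 1" for x t c u
      using holo_pairs_FD_pair_scale[OF h inUU[OF that]] by (simp add: fx_apply[OF that] segment_map_pair_scale)
    show "(\<lambda>t. of_real (t ^ k) * h (segment_map t x)) integrable_on cbox 0 1" if "x \<in> U \<times> U" for x
    proof -
      have "continuous_on (cbox 0 1) (\<lambda>t. blinfun_apply (segment_map t) x)"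
        by (intro continuous_intros continuous_on_segment_map)
      then have "continuous_on (cbox 0 1) (\<lambda>t. h (segment_map t x))"
        by (rule continuous_on_compose2[OF holo_pairs_continuous_on[OF h]]) (use inUU that in blast)
      then show ?thesis by (intro integrable_continuous continuous_intros)
    qed
    from continuous_on_FD_segment_map[OF U h]
    show "continuous_on ((U \<times> U) \<times> cbox 0 1) (\<lambda>(x, t). fx x t)"
      unfolding fx_def case_prod_beta
      by (intro continuous_intros continuous_on_compose2[OF continuous_on_segment_map]) auto
  qed
  then show ?thesis by (simp add: segment_map_apply)
qed

lemma holo_pairs_const [simp]: "holo_pairs S (\<lambda>p. c)"
  unfolding holo_pairs_def by (auto intro!: exI[of _ "\<lambda>h. 0"])

lemma holo_pairs_add:
  assumes "holo_pairs S f" "holo_pairs S g" shows "holo_pairs S (\<lambda>p. f p + g p)"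
  unfolding holo_pairs_def
proof
  fix p assume "p \<in> S"
  then show "\<exists>L. ((\<lambda>p. f p + g p) has_derivative L) (at p) \<and> (\<forall>c u. L (pair_scale c u) = c * L u)"
    using assms by (auto simp: distrib_left holo_pairs_FD_pair_scale
        intro!: exI[of _ "\<lambda>h. FD f p h + FD g p h"] has_derivative_add holo_pairs_has_FD)
qed

lemma holo_pairs_mult:
  assumes "holo_pairs S f" "holo_pairs S g" shows "holo_pairs S (\<lambda>p. f p * g p)"
  unfolding holo_pairs_def
proof
  fix p assume "p \<in> S"
  then show "\<exists>L. ((\<lambda>p. f p * g p) has_derivative L) (at p) \<and> (\<forall>c u. L (pair_scale c u) = c * L u)"
    using assms by (auto simp: algebra_simps holo_pairs_FD_pair_scale
        intro!: exI[of _ "\<lambda>h. f p * FD g p h + FD f p h * g p"] has_derivative_mult holo_pairs_has_FD)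
qed

lemma holo_pairs_cmult: "holo_pairs S f \<Longrightarrow> holo_pairs S (\<lambda>p. c * f p)"
  by (rule holo_pairs_mult[OF holo_pairs_const])

lemma holo_pairs_sum:
  "finite A \<Longrightarrow> (\<And>a. a \<in> A \<Longrightarrow> holo_pairs S (f a)) \<Longrightarrow> holo_pairs S (\<lambda>p. \<Sum>a\<in>A. f a p)"
  by (induction A rule: finite_induct) (auto intro: holo_pairs_add)

lemma holo_pairs_compose_linear:
  assumes "holo U f" "bounded_linear A" "\<And>c u. A (pair_scale c u) = c *s A u" "\<And>p. p \<in> S \<Longrightarrow> A p \<in> U"
  shows "holo_pairs S (\<lambda>p. f (A p))"
  unfolding holo_pairs_def
proof
  fix p assume p: "p \<in> S"
  obtain L where L: "(f has_derivative L) (at (A p))" "\<forall>c v. L (c *s v) = c * L v"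
    using assms(1) assms(4)[OF p] unfolding holo_def by blast
  have "((f \<circ> A) has_derivative (L \<circ> A)) (at p)"
    by (rule diff_chain_at[OF bounded_linear_imp_has_derivative[OF assms(2)] L(1)])
  then show "\<exists>L. ((\<lambda>p. f (A p)) has_derivative L) (at p) \<and> (\<forall>c u. L (pair_scale c u) = c * L u)"
    using L(2) assms(3) by (auto simp: o_def intro!: exI[of _ "L \<circ> A"])
qed

lemma holo_pairs_fst: "holo U f \<Longrightarrow> holo_pairs (U \<times> U) (\<lambda>p. f (fst p))"
  by (rule holo_pairs_compose_linear[where U=U]) (auto simp: pair_scale_def bounded_linear_fst)

lemma holo_pairs_snd: "holo U f \<Longrightarrow> holo_pairs (U \<times> U) (\<lambda>p. f (snd p))"
  by (rule holo_pairs_compose_linear[where U=U]) (auto simp: pair_scale_def bounded_linear_snd)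

lemma holo_pairs_coordinate_diff:
  "holo_pairs S (\<lambda>p::(complex^'n::finite) \<times> (complex^'n). fst p $ i - snd p $ i)"
proof -
  have "bounded_linear (\<lambda>p::(complex^'n) \<times> (complex^'n). fst p $ i - snd p $ i)"
    by (intro bounded_linear_sub bounded_linear_compose[OF bounded_linear_vec_nth]
        bounded_linear_fst bounded_linear_snd)
  then show ?thesis
    unfolding holo_pairs_def
    by (auto simp: bounded_linear_imp_has_derivative pair_scale_def algebra_simps
        intro!: exI[of _ "\<lambda>p. fst p $ i - snd p $ i"])
qed

lemma holo_const [simp]: "holo U (\<lambda>x. c)"
  unfolding holo_def by (auto intro!: exI[of _ "\<lambda>h. 0"])

lemma holo_mult:
  assumes "holo U f" "holo U g" shows "holo U (\<lambda>x. f x * g x)"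
  unfolding holo_def
proof
  fix p assume p: "p \<in> U"
  obtain L1 where L1: "(f has_derivative L1) (at p)" "\<forall>c u. L1 (c *s u) = c * L1 u"
    using assms(1) p unfolding holo_def by blast
  obtain L2 where L2: "(g has_derivative L2) (at p)" "\<forall>c u. L2 (c *s u) = c * L2 u"
    using assms(2) p unfolding holo_def by blast
  show "\<exists>L. ((\<lambda>x. f x * g x) has_derivative L) (at p) \<and> (\<forall>c v. L (c *s v) = c * L v)"
    using L1 L2 has_derivative_mult[OF L1(1) L2(1)]
    by (auto simp: algebra_simps intro!: exI[of _ "\<lambda>h. f p * L2 h + L1 h * g p"])
qed

lemma holo_cmult: "holo U f \<Longrightarrow> holo U (\<lambda>x. c * f x)"
  by (rule holo_mult[OF holo_const])

lemma holo_prod: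
  "finite A \<Longrightarrow> (\<And>a. a \<in> A \<Longrightarrow> holo U (f a)) \<Longrightarrow> holo U (\<lambda>x. \<Prod>a\<in>A. f a x)"
  by (induction A rule: finite_induct) (auto intro: holo_mult)

lemma holo_diagonal:
  assumes "holo_pairs (U \<times> U) (case_prod g)" shows "holo U (\<lambda>x. g x x)"
  unfolding holo_def
proof
  fix x assume x: "x \<in> U"
  have "bounded_linear (\<lambda>v::complex^'n. (v, v))" by (intro bounded_linear_Pair bounded_linear_ident)
  then have "((case_prod g \<circ> (\<lambda>v. (v, v))) has_derivative (FD (case_prod g) (x, x) \<circ> (\<lambda>v. (v, v)))) (at x)"
    by (intro diff_chain_at bounded_linear_imp_has_derivative holo_pairs_has_FD[OF assms]) (use x in auto)
  then show "\<exists>L. ((\<lambda>x. g x x) has_derivative L) (at x) \<and> (\<forall>c v. L (c *s v) = c * L v)"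
    using holo_pairs_FD_pair_scale[OF assms, of "(x, x)"] x
    by (intro exI[of _ "FD (case_prod g) (x, x) \<circ> (\<lambda>v. (v, v))"]) (auto simp: o_def pair_scale_def)
qed

section \<open>The Koszul complex and the homotopy \<open>P\<close>\<close>

lemma upd_eq_add: "upd x j w = x + (w - x$j) *s axis j 1"
  by (simp add: upd_def vec_eq_iff axis_def)

lemma upd_same [simp]: "upd x j (x$j) = x"
  by (simp add: upd_def vec_eq_iff)

lemma upd_nth: "upd x j w $ i = (if i = j then w else x $ i)"
  by (simp add: upd_def)

lemma continuous_on_upd: "continuous_on A (upd x j)"
  unfolding upd_def[abs_def]
proof (intro continuous_on_vec_lambda)
  show "continuous_on A (\<lambda>w. if k = j then w else x $ k)" for k
    by (cases "k = j") (simp_all add: continuous_on_id)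
qed

lemma
  assumes g: "holo_pairs S (case_prod g)" and x\<zeta>: "(x, \<zeta>) \<in> S"
  shows has_field_derivative_pz: "((\<lambda>w. g (upd x j w) \<zeta>) has_field_derivative pz j g x \<zeta>) (at (x$j))"
    and pz_eq_FD: "pz j g x \<zeta> = FD (case_prod g) (x, \<zeta>) (axis j 1, 0)"
proof -
  define e :: "(complex^'a) \<times> (complex^'a)" where "e = (axis j 1, 0)"
  define x0 where "x0 = (x, \<zeta>) - pair_scale (x$j) e"
  have x0: "x0 + pair_scale (x$j) e = (x, \<zeta>)" by (simp add: x0_def)
  have "(\<lambda>w. g (upd x j w) \<zeta>) = (\<lambda>w. case_prod g (x0 + pair_scale w e))"
    by (rule ext) (simp add: upd_eq_add x0_def e_def pair_scale_def vec_eq_iff algebra_simps)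
  moreover have "((\<lambda>w. case_prod g (x0 + pair_scale w e)) has_field_derivative FD (case_prod g) (x, \<zeta>) e) (at (x$j))"
    using holo_pairs_complex_line[OF g, of x0 "x$j" e] x\<zeta> by (simp only: x0)
  ultimately have d: "((\<lambda>w. g (upd x j w) \<zeta>) has_field_derivative FD (case_prod g) (x, \<zeta>) (axis j 1, 0)) (at (x$j))"
    by (simp add: e_def)
  then show "pz j g x \<zeta> = FD (case_prod g) (x, \<zeta>) (axis j 1, 0)"
    unfolding pz_def by (rule DERIV_imp_deriv)
  with d show "((\<lambda>w. g (upd x j w) \<zeta>) has_field_derivative pz j g x \<zeta>) (at (x$j))"
    by simp
qed

lemma pz_zero [simp]: "pz j (\<lambda>x \<zeta>. 0) x \<zeta> = 0"
  by (simp add: pz_def)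

lemma FD_first_component:
  assumes "holo_pairs S G" "p \<in> S"
  shows "FD G p (w, 0) = (\<Sum>i\<in>UNIV. w$i * FD G p (axis i 1, 0))"
proof -
  have "(w, 0::complex^_) = (\<Sum>i\<in>UNIV. pair_scale (w$i) (axis i 1, 0))"
    by (simp add: pair_scale_def sum_prod basis_expansion)
  then have "FD G p (w, 0) = (\<Sum>i\<in>UNIV. FD G p (pair_scale (w$i) (axis i 1, 0)))"
    by (simp add: linear_sum[OF bounded_linear.linear[OF holo_pairs_bounded_linear_FD[OF assms]]])
  then show ?thesis using holo_pairs_FD_pair_scale[OF assms] by simp
qed

lemma holo_pairs_pz:
  assumes "open U" "holo_pairs (U \<times> U) (case_prod g)"
  shows "holo_pairs (U \<times> U) (case_prod (pz j g))"
proof -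
  have UU: "open (U \<times> U)" using assms(1) by (simp add: open_Times)
  show ?thesis
    using pz_eq_FD[OF assms(2)]
    by (intro holo_pairs_transform[OF holo_pairs_FD_dir[OF UU assms(2)] UU]) auto
qed

lemma pz_sum:
  assumes "finite A" "\<And>a. a \<in> A \<Longrightarrow> holo_pairs S (case_prod (\<omega> a))" "(x, \<zeta>) \<in> S"
  shows "pz j (\<lambda>x \<zeta>. \<Sum>a\<in>A. c a * \<omega> a x \<zeta>) x \<zeta> = (\<Sum>a\<in>A. c a * pz j (\<omega> a) x \<zeta>)"
proof -
  have "((\<lambda>w. \<Sum>a\<in>A. c a * \<omega> a (upd x j w) \<zeta>) has_field_derivative (\<Sum>a\<in>A. c a * pz j (\<omega> a) x \<zeta>)) (at (x$j))"
    by (intro DERIV_sum DERIV_cmult has_field_derivative_pz[OF assms(2)] assms(3))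
  then show ?thesis unfolding pz_def by (rule DERIV_imp_deriv)
qed

lemma KosD:
  assumes "\<omega> \<in> Kos U q"
  shows Kos_off_degree: "card I \<noteq> q \<Longrightarrow> \<omega> I = (\<lambda>z \<zeta>. 0)"
    and Kos_outside: "z \<notin> U \<or> \<zeta> \<notin> U \<Longrightarrow> \<omega> I z \<zeta> = 0"
    and Kos_holo: "holo_pairs (U \<times> U) (case_prod (\<omega> I))"
  using assms unfolding Kos_def by (auto simp: holo2_iff_holo_pairs)

lemma KosI:
  assumes "\<And>I. card I \<noteq> q \<Longrightarrow> \<omega> I = (\<lambda>z \<zeta>. 0)"
    and "\<And>I z \<zeta>. z \<notin> U \<or> \<zeta> \<notin> U \<Longrightarrow> \<omega> I z \<zeta> = 0"
    and "\<And>I. holo_pairs (U \<times> U) (case_prod (\<omega> I))"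
  shows "\<omega> \<in> Kos U q"
  using assms unfolding Kos_def by (auto simp: holo2_iff_holo_pairs)

lemma Kos_module_sum:
  fixes Y :: "'a \<Rightarrow> 'n::finite kos"
  assumes "finite A" "\<And>a. a \<in> A \<Longrightarrow> Y a \<in> Kos U q"
    and "\<And>a. a \<in> A \<Longrightarrow> holo U (f a)" "\<And>a. a \<in> A \<Longrightarrow> holo U (g a)"
  shows "(\<lambda>I z \<zeta>. \<Sum>a\<in>A. f a z * g a \<zeta> * Y a I z \<zeta>) \<in> Kos U q"
proof (rule KosI)
  fix I :: "'n set"
  have "holo_pairs (U \<times> U) (\<lambda>p. \<Sum>a\<in>A. f a (fst p) * g a (snd p) * case_prod (Y a I) p)"
    using assms by (intro holo_pairs_sum holo_pairs_mult holo_pairs_fst holo_pairs_snd Kos_holo)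
  then show "holo_pairs (U \<times> U) (case_prod (\<lambda>z \<zeta>. \<Sum>a\<in>A. f a z * g a \<zeta> * Y a I z \<zeta>))"
    by (simp add: case_prod_beta')
next
  fix I :: "'n set" assume "card I \<noteq> q"
  then show "(\<lambda>z \<zeta>. \<Sum>a\<in>A. f a z * g a \<zeta> * Y a I z \<zeta>) = (\<lambda>z \<zeta>. 0)"
    using Kos_off_degree[OF assms(2)] by (auto simp: fun_eq_iff intro!: sum.neutral)
next
  fix I z \<zeta> assume "z \<notin> U \<or> \<zeta> \<notin> U"
  then show "(\<Sum>a\<in>A. f a z * g a \<zeta> * Y a I z \<zeta>) = 0"
    using Kos_outside[OF assms(2)] by (auto intro!: sum.neutral)
qed

lemma Kos_zero: "(\<lambda>I z \<zeta>. 0) \<in> Kos U q"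
  using Kos_module_sum[of "{}"] by simp

lemma Kos_unit:
  assumes "open U" shows "(\<lambda>I z \<zeta>. if I = {} \<and> z \<in> U \<and> \<zeta> \<in> U then 1 else 0) \<in> Kos U 0"
proof (rule KosI)
  show "holo_pairs (U \<times> U) (case_prod (\<lambda>z \<zeta>. if I = {} \<and> z \<in> U \<and> \<zeta> \<in> U then 1 else 0))" for I
    by (rule holo_pairs_transform[OF holo_pairs_const[of _ "if I = {} then 1 else 0"]])
       (use assms in \<open>auto simp: open_Times\<close>)
qed auto

lemma Kos_above_dim:
  fixes \<omega> :: "'n::finite kos"
  assumes "\<omega> \<in> Kos U q" "q > CARD('n)"
  shows "\<omega> = (\<lambda>I z \<zeta>. 0)"
proof -
  have "\<omega> I = (\<lambda>z \<zeta>. 0)" for I :: "'n set"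
    using card_mono[of UNIV I] assms(2) by (intro Kos_off_degree[OF assms(1)]) simp
  then show ?thesis by auto
qed

lemma continuous_on_segment_eval:
  assumes "holo_pairs (U \<times> U) (case_prod g)" "convex U" "z \<in> U" "\<zeta> \<in> U"
  shows "continuous_on {0..1} (\<lambda>t. g (\<zeta> + t *\<^sub>R (z - \<zeta>)) \<zeta>)"
proof -
  have "continuous_on {0..1} (\<lambda>t::real. (\<zeta> + t *\<^sub>R (z - \<zeta>), \<zeta>))"
    by (intro continuous_intros)
  then have "continuous_on {0..1} (\<lambda>t. case_prod g (\<zeta> + t *\<^sub>R (z - \<zeta>), \<zeta>))"
    by (rule continuous_on_compose2[OF holo_pairs_continuous_on[OF assms(1)]])
       (use convex_segment_point[OF assms(2-4)] assms(4) in auto)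
  then show ?thesis by simp
qed

lemma integrable_segment_eval:
  assumes "holo_pairs (U \<times> U) (case_prod g)" "convex U" "z \<in> U" "\<zeta> \<in> U"
  shows "(\<lambda>t. of_real (t ^ k) * g (\<zeta> + t *\<^sub>R (z - \<zeta>)) \<zeta>) integrable_on {0..1}"
  by (intro integrable_continuous_interval continuous_intros continuous_on_segment_eval[OF assms])

lemma Pop_Kos:
  fixes U :: "(complex^'n::{finite,linorder}) set"
  assumes U: "open U" "convex U" and \<omega>: "\<omega> \<in> Kos U q"
  shows "Pop U \<omega> \<in> Kos U (Suc q)"
proof (rule KosI)
  fix J :: "'n set" assume J: "card J \<noteq> Suc q"
  have "card (J - {j}) \<noteq> q" if "j \<in> J" for j
    using J that by (simp add: card_Diff_singleton) (metis One_nat_def Suc_pred card_gt_0_iff finite empty_iff)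
  then show "Pop U \<omega> J = (\<lambda>z \<zeta>. 0)"
    by (auto simp: Pop_def Kos_off_degree[OF \<omega>] fun_eq_iff intro!: sum.neutral)
next
  fix J :: "'n set"
  have UU: "open (U \<times> U)" using U by (simp add: open_Times)
  have "holo_pairs (U \<times> U) (\<lambda>p. integral {0..1} (\<lambda>t. of_real (t ^ (card J - 1)) *
      case_prod (pz j (\<omega> (J - {j}))) (snd p + t *\<^sub>R (fst p - snd p), snd p)))" for j
    by (rule holo_pairs_segment_integral[OF U holo_pairs_pz[OF U(1) Kos_holo[OF \<omega>]]])
  then have "holo_pairs (U \<times> U) (\<lambda>p. \<Sum>j\<in>J. sgnK j (J - {j}) * integral {0..1} (\<lambda>t. of_real (t ^ (card J - 1)) *
      case_prod (pz j (\<omega> (J - {j}))) (snd p + t *\<^sub>R (fst p - snd p), snd p)))"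
    by (intro holo_pairs_sum holo_pairs_cmult) auto
  then show "holo_pairs (U \<times> U) (case_prod (Pop U \<omega> J))"
    by (rule holo_pairs_transform[OF _ UU]) (auto simp: Pop_def)
qed (auto simp: Pop_def)

lemma Pop_sum:
  fixes U :: "(complex^'n::{finite,linorder}) set"
  assumes U: "open U" "convex U" and A: "finite A" "\<And>a. a \<in> A \<Longrightarrow> \<omega> a \<in> Kos U q"
  shows "Pop U (\<lambda>I z \<zeta>. \<Sum>a\<in>A. c a * \<omega> a I z \<zeta>) = (\<lambda>J z \<zeta>. \<Sum>a\<in>A. c a * Pop U (\<omega> a) J z \<zeta>)"
proof (intro ext)
  fix J z \<zeta>
  show "Pop U (\<lambda>I z \<zeta>. \<Sum>a\<in>A. c a * \<omega> a I z \<zeta>) J z \<zeta> = (\<Sum>a\<in>A. c a * Pop U (\<omega> a) J z \<zeta>)"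
  proof (cases "z \<in> U \<and> \<zeta> \<in> U")
    case True
    have integrable: "(\<lambda>t. of_real (t ^ (card J - 1)) * pz j (\<omega> a (J - {j})) (\<zeta> + t *\<^sub>R (z - \<zeta>)) \<zeta>)
        integrable_on {0..1}" if "a \<in> A" for a j
      using True by (intro integrable_segment_eval[OF holo_pairs_pz[OF U(1) Kos_holo[OF A(2)]] U(2)] that) auto
    have "integral {0..1} (\<lambda>t. of_real (t ^ (card J - 1)) *
          pz j (\<lambda>x y. \<Sum>a\<in>A. c a * \<omega> a (J - {j}) x y) (\<zeta> + t *\<^sub>R (z - \<zeta>)) \<zeta>) =
        integral {0..1} (\<lambda>t. \<Sum>a\<in>A. c a * (of_real (t ^ (card J - 1)) *
          pz j (\<omega> a (J - {j})) (\<zeta> + t *\<^sub>R (z - \<zeta>)) \<zeta>))" for j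
      using True convex_segment_point[OF U(2)]
      by (intro integral_cong) (simp add: pz_sum[OF A(1) Kos_holo[OF A(2)]] sum_distrib_left mult_ac)
    also have "\<dots> j = (\<Sum>a\<in>A. c a * integral {0..1} (\<lambda>t. of_real (t ^ (card J - 1)) *
          pz j (\<omega> a (J - {j})) (\<zeta> + t *\<^sub>R (z - \<zeta>)) \<zeta>))" for j
      using integrable by (subst integral_sum) (auto simp: A(1) integrable_on_mult_right)
    finally show ?thesis
      using True by (simp add: Pop_def sum_distrib_left mult_ac sum.swap[of _ J])
  next
    case False
    then show ?thesis by (simp only: Pop_def if_not_P[OF False]) simp
  qed
qed

lemma Pop_zero: "Pop U (\<lambda>I z \<zeta>. 0) = (\<lambda>I z \<zeta>. 0)"
  by (simp add: Pop_def fun_eq_iff)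

lemma dK_Kos:
  fixes U :: "(complex^'n::{finite,linorder}) set"
  assumes U: "open U" and \<omega>: "\<omega> \<in> Kos U (Suc q)"
  shows "dK U \<omega> \<in> Kos U q"
proof (rule KosI)
  fix K :: "'n set" assume K: "card K \<noteq> q"
  have "card (insert i K) \<noteq> Suc q" if "i \<notin> K" for i using K that by simp
  then show "dK U \<omega> K = (\<lambda>z \<zeta>. 0)"
    by (auto simp: dK_def Kos_off_degree[OF \<omega>] fun_eq_iff intro!: sum.neutral)
next
  fix K :: "'n set"
  have UU: "open (U \<times> U)" using U by (simp add: open_Times)
  have "holo_pairs (U \<times> U) (\<lambda>p. \<Sum>i\<in>UNIV - K. sgnK i K * (fst p $ i - snd p $ i) * case_prod (\<omega> (insert i K)) p)"
    by (intro holo_pairs_sum holo_pairs_mult holo_pairs_cmult holo_pairs_coordinate_diff Kos_holo[OF \<omega>]) auto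
  then show "holo_pairs (U \<times> U) (case_prod (dK U \<omega> K))"
    by (rule holo_pairs_transform[OF _ UU]) (auto simp: dK_def mult.assoc)
qed (auto simp: dK_def)

lemma dK_Kos_0:
  assumes "\<omega> \<in> Kos U 0"
  shows "dK U \<omega> = (\<lambda>I z \<zeta>. 0)"
  using Kos_off_degree[OF assms] by (auto simp: dK_def fun_eq_iff intro!: sum.neutral)

lemma dK_zero: "dK U (\<lambda>I z \<zeta>. 0) = (\<lambda>I z \<zeta>. 0)"
  by (simp add: dK_def fun_eq_iff)

lemma pz_dK:
  fixes U :: "(complex^'n::{finite,linorder}) set"
  assumes U: "open U" and \<omega>: "\<omega> \<in> Kos U q" and x: "x \<in> U" and \<zeta>: "\<zeta> \<in> U"
  shows "pz j (dK U \<omega> K) x \<zeta> = (\<Sum>i\<in>UNIV - K. sgnK i K *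
      ((if i = j then 1 else 0) * \<omega> (insert i K) x \<zeta> + (x$i - \<zeta>$i) * pz j (\<omega> (insert i K)) x \<zeta>))"
proof -
  define F where "F w = (\<Sum>i\<in>UNIV - K. sgnK i K * ((upd x j w $ i - \<zeta>$i) * \<omega> (insert i K) (upd x j w) \<zeta>))" for w
  have x\<zeta>: "(x, \<zeta>) \<in> U \<times> U" using x \<zeta> by simp
  have coord: "((\<lambda>w. upd x j w $ i - \<zeta>$i) has_field_derivative (if i = j then 1 else 0)) (at (x$j))" for i
    by (cases "i = j") (auto simp: upd_nth intro!: derivative_eq_intros)
  have "(F has_field_derivative (\<Sum>i\<in>UNIV - K. sgnK i K *
      ((if i = j then 1 else 0) * \<omega> (insert i K) (upd x j (x$j)) \<zeta> +
        pz j (\<omega> (insert i K)) x \<zeta> * (upd x j (x$j) $ i - \<zeta>$i)))) (at (x$j))"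
    unfolding F_def by (intro DERIV_sum DERIV_cmult DERIV_mult coord has_field_derivative_pz[OF Kos_holo[OF \<omega>] x\<zeta>])
  then have "(F has_field_derivative (\<Sum>i\<in>UNIV - K. sgnK i K *
      ((if i = j then 1 else 0) * \<omega> (insert i K) x \<zeta> + (x$i - \<zeta>$i) * pz j (\<omega> (insert i K)) x \<zeta>))) (at (x$j))"
    by (simp add: mult.commute[of "pz j _ _ _"])
  moreover have "open (upd x j -` U)"
    by (rule continuous_open_vimage[OF U])
       (metis continuous_on_upd continuous_on_eq_continuous_at open_UNIV UNIV_I)
  moreover have "x$j \<in> upd x j -` U" using x by simp
  moreover have "F w = dK U \<omega> K (upd x j w) \<zeta>" if "w \<in> upd x j -` U" for w
    using that \<zeta> by (simp add: F_def dK_def mult.assoc)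
  ultimately have "((\<lambda>w. dK U \<omega> K (upd x j w) \<zeta>) has_field_derivative (\<Sum>i\<in>UNIV - K. sgnK i K *
      ((if i = j then 1 else 0) * \<omega> (insert i K) x \<zeta> + (x$i - \<zeta>$i) * pz j (\<omega> (insert i K)) x \<zeta>))) (at (x$j))"
    by (rule has_field_derivative_transform_within_open)
  then show ?thesis unfolding pz_def by (rule DERIV_imp_deriv)
qed

lemma sgnK_square [simp]: "sgnK i I * sgnK i I = 1"
  by (simp add: sgnK_def flip: power_add mult_2)

lemma sgnK_swap:
  fixes I :: "'n::{finite,linorder} set"
  assumes j: "j \<in> I" and i: "i \<notin> I"
  shows "sgnK i I * sgnK j (insert i I - {j}) = - (sgnK j (I - {j}) * sgnK i (I - {j}))"
proof -
  have ij: "i \<noteq> j" using i j by auto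
  have "{l\<in>I. l < i} = (if j < i then insert j {l\<in>I - {j}. l < i} else {l\<in>I - {j}. l < i})"
    using j by auto
  then have c1: "card {l\<in>I. l < i} = card {l\<in>I - {j}. l < i} + (if j < i then 1 else 0)"
    by simp
  have "{l\<in>insert i I - {j}. l < j} = (if i < j then insert i {l\<in>I - {j}. l < j} else {l\<in>I - {j}. l < j})"
    using ij by auto
  then have c2: "card {l\<in>insert i I - {j}. l < j} = card {l\<in>I - {j}. l < j} + (if i < j then 1 else 0)"
    using i by simp
  show ?thesis
    using c1 c2 ij by (cases "i < j") (auto simp: sgnK_def power_add)
qed

lemma koszul_mixed_terms_cancel:
  fixes I :: "'n::{finite,linorder} set"
  shows "(\<Sum>i\<in>UNIV - I. \<Sum>j\<in>I. sgnK i I * sgnK j (insert i I - {j}) * c i j) +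
    (\<Sum>j\<in>I. \<Sum>i\<in>UNIV - I. sgnK j (I - {j}) * sgnK i (I - {j}) * c i j) = 0"
proof -
  have "(\<Sum>i\<in>UNIV - I. \<Sum>j\<in>I. sgnK i I * sgnK j (insert i I - {j}) * c i j) =
      (\<Sum>i\<in>UNIV - I. \<Sum>j\<in>I. - (sgnK j (I - {j}) * sgnK i (I - {j}) * c i j))"
    by (intro sum.cong refl) (simp add: sgnK_swap)
  also have "\<dots> = - (\<Sum>j\<in>I. \<Sum>i\<in>UNIV - I. sgnK j (I - {j}) * sgnK i (I - {j}) * c i j)"
    by (subst sum.swap) (simp add: sum_negf)
  finally show ?thesis by simp
qed

text \<open>The algebraic core of the homotopy formula: after the mixed terms cancel, what remains
  is the Euler-type derivative \<open>q T' b + T \<Sum> W a\<close>.\<close>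
lemma koszul_homotopy_identity:
  fixes I :: "'n::{finite,linorder} set" and a :: "'n set \<Rightarrow> 'n \<Rightarrow> complex" and b :: "'n set \<Rightarrow> complex"
  assumes T: "q \<ge> 1 \<Longrightarrow> T = t * T'" and cI: "card I = q"
  shows "(\<Sum>i\<in>UNIV - I. sgnK i I * W i * (\<Sum>j\<in>insert i I. sgnK j (insert i I - {j}) * (T * a (insert i I - {j}) j)))
       + (\<Sum>j\<in>I. sgnK j (I - {j}) * (T' * (\<Sum>i\<in>UNIV - (I - {j}). sgnK i (I - {j}) *
            ((if i = j then 1 else 0) * b (insert i (I - {j})) + t * W i * a (insert i (I - {j})) j))))
       = of_nat q * T' * b I + T * (\<Sum>i\<in>UNIV. W i * a I i)"
proof -
  define c where "c i j = T * W i * a (insert i (I - {j})) j" for i j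
  have S1: "(\<Sum>i\<in>UNIV - I. sgnK i I * W i * (\<Sum>j\<in>insert i I. sgnK j (insert i I - {j}) * (T * a (insert i I - {j}) j)))
      = (\<Sum>i\<in>UNIV - I. T * W i * a I i + (\<Sum>j\<in>I. sgnK i I * sgnK j (insert i I - {j}) * c i j))"
  proof (rule sum.cong[OF refl])
    fix i assume i: "i \<in> UNIV - I"
    have "insert i I - {i} = I" "\<And>j. j \<in> I \<Longrightarrow> insert i I - {j} = insert i (I - {j})" using i by auto
    then have "(\<Sum>j\<in>insert i I. sgnK j (insert i I - {j}) * (T * a (insert i I - {j}) j)) =
        sgnK i I * (T * a I i) + (\<Sum>j\<in>I. sgnK j (insert i I - {j}) * (T * a (insert i (I - {j})) j))"
      using i by (simp cong: sum.cong)
    then show "sgnK i I * W i * (\<Sum>j\<in>insert i I. sgnK j (insert i I - {j}) * (T * a (insert i I - {j}) j))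
        = T * W i * a I i + (\<Sum>j\<in>I. sgnK i I * sgnK j (insert i I - {j}) * c i j)"
      by (simp add: c_def distrib_left sum_distrib_left algebra_simps)
  qed
  have S2: "(\<Sum>j\<in>I. sgnK j (I - {j}) * (T' * (\<Sum>i\<in>UNIV - (I - {j}). sgnK i (I - {j}) *
            ((if i = j then 1 else 0) * b (insert i (I - {j})) + t * W i * a (insert i (I - {j})) j))))
      = (\<Sum>j\<in>I. T' * b I + T * W j * a I j + (\<Sum>i\<in>UNIV - I. sgnK j (I - {j}) * sgnK i (I - {j}) * c i j))"
  proof (rule sum.cong[OF refl])
    fix j assume j: "j \<in> I"
    then have "q \<ge> 1" using cI by (metis One_nat_def Suc_leI card_gt_0_iff empty_iff finite)
    have "UNIV - (I - {j}) = insert j (UNIV - I)" using j by auto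
    then have "(\<Sum>i\<in>UNIV - (I - {j}). sgnK i (I - {j}) *
            ((if i = j then 1 else 0) * b (insert i (I - {j})) + t * W i * a (insert i (I - {j})) j))
        = sgnK j (I - {j}) * (b I + t * W j * a I j) +
          (\<Sum>i\<in>UNIV - I. sgnK i (I - {j}) * (t * W i * a (insert i (I - {j})) j))"
      using j by (simp add: insert_absorb) (auto intro!: sum.cong)
    then show "sgnK j (I - {j}) * (T' * (\<Sum>i\<in>UNIV - (I - {j}). sgnK i (I - {j}) *
            ((if i = j then 1 else 0) * b (insert i (I - {j})) + t * W i * a (insert i (I - {j})) j)))
        = T' * b I + T * W j * a I j + (\<Sum>i\<in>UNIV - I. sgnK j (I - {j}) * sgnK i (I - {j}) * c i j)"
      unfolding c_def T[OF \<open>q \<ge> 1\<close>] by (simp add: distrib_left sum_distrib_left algebra_simps)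
  qed
  have diag: "(\<Sum>i\<in>UNIV - I. T * W i * a I i) + (\<Sum>j\<in>I. T * W j * a I j) = T * (\<Sum>i\<in>UNIV. W i * a I i)"
    by (simp add: sum.subset_diff[of I UNIV] sum_distrib_left distrib_left mult.assoc)
  show ?thesis
    unfolding S1 S2 using koszul_mixed_terms_cancel[of I c] diag cI
    by (simp add: sum.distrib algebra_simps)
qed

lemma has_vector_derivative_segment_eval:
  assumes g: "holo_pairs (U \<times> U) (case_prod g)" and U: "convex U" and z: "z \<in> U" and \<zeta>: "\<zeta> \<in> U"
    and t: "t \<in> {0..1}"
  shows "((\<lambda>t. g (\<zeta> + t *\<^sub>R (z - \<zeta>)) \<zeta>) has_vector_derivative
      (\<Sum>i\<in>UNIV. (z$i - \<zeta>$i) * pz i g (\<zeta> + t *\<^sub>R (z - \<zeta>)) \<zeta>)) (at t within {0..1})"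
proof -
  have pt: "(\<zeta> + t *\<^sub>R (z - \<zeta>), \<zeta>) \<in> U \<times> U" using convex_segment_point[OF U z \<zeta> t] \<zeta> by simp
  have "((\<lambda>t. \<zeta> + t *\<^sub>R (z - \<zeta>)) has_vector_derivative (0 + (t *\<^sub>R 0 + 1 *\<^sub>R (z - \<zeta>)))) (at t within {0..1})"
    by (intro has_vector_derivative_add has_vector_derivative_const has_vector_derivative_scaleR DERIV_ident)
  then have path: "((\<lambda>t. (\<zeta> + t *\<^sub>R (z - \<zeta>), \<zeta>)) has_vector_derivative (z - \<zeta>, 0)) (at t within {0..1})"
    by (intro has_vector_derivative_Pair has_vector_derivative_const) simp
  have "((case_prod g \<circ> (\<lambda>t. (\<zeta> + t *\<^sub>R (z - \<zeta>), \<zeta>))) has_vector_derivative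
      FD (case_prod g) (\<zeta> + t *\<^sub>R (z - \<zeta>), \<zeta>) (z - \<zeta>, 0)) (at t within {0..1})"
    by (rule vector_derivative_diff_chain_within[OF path has_derivative_at_withinI[OF holo_pairs_has_FD[OF g pt]]])
  then show ?thesis
    by (subst (asm) FD_first_component[OF g pt]) (simp add: o_def pz_eq_FD[OF g pt])
qed

lemma dK_Pop_has_integral:
  fixes U :: "(complex^'n::{finite,linorder}) set"
  assumes U: "open U" "convex U" and \<omega>: "\<omega> \<in> Kos U q" and z: "z \<in> U" and \<zeta>: "\<zeta> \<in> U" and I: "card I = q"
  shows "((\<lambda>t. \<Sum>i\<in>UNIV - I. sgnK i I * (z$i - \<zeta>$i) * (\<Sum>j\<in>insert i I. sgnK j (insert i I - {j}) *
      (of_real (t ^ q) * pz j (\<omega> (insert i I - {j})) (\<zeta> + t *\<^sub>R (z - \<zeta>)) \<zeta>)))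
      has_integral dK U (Pop U \<omega>) I z \<zeta>) {0..1}"
proof -
  have "dK U (Pop U \<omega>) I z \<zeta> = (\<Sum>i\<in>UNIV - I. sgnK i I * (z$i - \<zeta>$i) *
      (\<Sum>j\<in>insert i I. sgnK j (insert i I - {j}) *
        integral {0..1} (\<lambda>t. of_real (t ^ q) * pz j (\<omega> (insert i I - {j})) (\<zeta> + t *\<^sub>R (z - \<zeta>)) \<zeta>)))"
    using z \<zeta> I by (auto simp: dK_def Pop_def intro!: sum.cong)
  then show ?thesis
    using integrable_segment_eval[OF holo_pairs_pz[OF U(1) Kos_holo[OF \<omega>]] U(2) z \<zeta>]
    by (simp only:) (intro has_integral_sum has_integral_mult_right integrable_integral; simp)
qed

lemma Pop_dK_has_integral:
  fixes U :: "(complex^'n::{finite,linorder}) set"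
  assumes U: "open U" "convex U" and \<omega>: "\<omega> \<in> Kos U q" and z: "z \<in> U" and \<zeta>: "\<zeta> \<in> U" and I: "card I = q"
  shows "((\<lambda>t. \<Sum>j\<in>I. sgnK j (I - {j}) * (of_real (t ^ (q - 1)) * (\<Sum>i\<in>UNIV - (I - {j}). sgnK i (I - {j}) *
      ((if i = j then 1 else 0) * \<omega> (insert i (I - {j})) (\<zeta> + t *\<^sub>R (z - \<zeta>)) \<zeta> +
        of_real t * (z$i - \<zeta>$i) * pz j (\<omega> (insert i (I - {j}))) (\<zeta> + t *\<^sub>R (z - \<zeta>)) \<zeta>))))
      has_integral Pop U (dK U \<omega>) I z \<zeta>) {0..1}"
proof -
  let ?P = "\<lambda>j t. \<Sum>i\<in>UNIV - (I - {j}). sgnK i (I - {j}) *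
      ((if i = j then 1 else 0) * \<omega> (insert i (I - {j})) (\<zeta> + t *\<^sub>R (z - \<zeta>)) \<zeta> +
        of_real t * (z$i - \<zeta>$i) * pz j (\<omega> (insert i (I - {j}))) (\<zeta> + t *\<^sub>R (z - \<zeta>)) \<zeta>)"
  have shift: "(\<zeta> + t *\<^sub>R (z - \<zeta>)) $ i - \<zeta> $ i = of_real t * (z$i - \<zeta>$i)" for t i
  proof -
    have "(\<zeta> + t *\<^sub>R (z - \<zeta>)) $ i - \<zeta> $ i = t *\<^sub>R (z$i - \<zeta>$i)" by simp
    then show ?thesis by (simp add: scaleR_conv_of_real)
  qed
  have "pz j (dK U \<omega> (I - {j})) (\<zeta> + t *\<^sub>R (z - \<zeta>)) \<zeta> = ?P j t" if "t \<in> {0..1}" for j t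
    unfolding pz_dK[OF U(1) \<omega> convex_segment_point[OF U(2) z \<zeta> that] \<zeta>] shift ..
  then have "Pop U (dK U \<omega>) I z \<zeta> = (\<Sum>j\<in>I. sgnK j (I - {j}) * integral {0..1} (\<lambda>t. of_real (t ^ (q - 1)) * ?P j t))"
    using z \<zeta> I by (auto simp: Pop_def intro!: sum.cong integral_cong)
  moreover have contP: "continuous_on {0..1} (?P j)" for j
  proof -
    have "continuous_on {0..1} (\<lambda>t. \<omega> K (\<zeta> + t *\<^sub>R (z - \<zeta>)) \<zeta>)"
      "continuous_on {0..1} (\<lambda>t. pz j (\<omega> K) (\<zeta> + t *\<^sub>R (z - \<zeta>)) \<zeta>)" for K
      using continuous_on_segment_eval[OF Kos_holo[OF \<omega>] U(2) z \<zeta>]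
        continuous_on_segment_eval[OF holo_pairs_pz[OF U(1) Kos_holo[OF \<omega>]] U(2) z \<zeta>] by blast+
    then show ?thesis by (intro continuous_intros) auto
  qed
  moreover have "(\<lambda>t. of_real (t ^ (q - 1)) * ?P j t) integrable_on {0..1}" for j
    by (rule integrable_continuous_interval, rule continuous_on_mult[OF _ contP]) (intro continuous_intros)
  ultimately show ?thesis
    by (simp only:) (intro has_integral_sum has_integral_mult_right integrable_integral; simp)
qed

lemma dK_Pop_Pop_dK_off_degree:
  fixes U :: "(complex^'n::{finite,linorder}) set"
  assumes U: "open U" "convex U" and \<omega>: "\<omega> \<in> Kos U q" and I: "card I \<noteq> q"
  shows "dK U (Pop U \<omega>) I z \<zeta> = 0" and "Pop U (dK U \<omega>) I z \<zeta> = 0"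
proof -
  show "dK U (Pop U \<omega>) I z \<zeta> = 0"
    using Kos_off_degree[OF dK_Kos[OF U(1) Pop_Kos[OF U \<omega>]] I] by simp
  show "Pop U (dK U \<omega>) I z \<zeta> = 0"
  proof (cases q)
    case 0
    then have "dK U \<omega> = (\<lambda>I z \<zeta>. 0)" using dK_Kos_0 \<omega> by simp
    then show ?thesis by (simp add: Pop_zero)
  next
    case (Suc q')
    then have "Pop U (dK U \<omega>) \<in> Kos U q" using Pop_Kos[OF U dK_Kos[OF U(1)]] \<omega> by simp
    then show ?thesis using Kos_off_degree I by metis
  qed
qed

lemma dK_Pop_add_Pop_dK:
  fixes U :: "(complex^'n::{finite,linorder}) set"
  assumes U: "open U" "convex U" and \<omega>: "\<omega> \<in> Kos U q" and z: "z \<in> U" and \<zeta>: "\<zeta> \<in> U"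
  shows "dK U (Pop U \<omega>) I z \<zeta> + Pop U (dK U \<omega>) I z \<zeta> = \<omega> I z \<zeta> - (if q = 0 then \<omega> I \<zeta> \<zeta> else 0)"
proof (cases "card I = q")
  case False
  then show ?thesis using dK_Pop_Pop_dK_off_degree[OF U \<omega> False] Kos_off_degree[OF \<omega> False] by simp
next
  case True
  define a where "a K j t = pz j (\<omega> K) (\<zeta> + t *\<^sub>R (z - \<zeta>)) \<zeta>" for K j t
  define b where "b K t = \<omega> K (\<zeta> + t *\<^sub>R (z - \<zeta>)) \<zeta>" for K t
  define f' where "f' t = t ^ q *\<^sub>R (\<Sum>i\<in>UNIV. (z$i - \<zeta>$i) * a I i t) + (real q * t ^ (q - 1)) *\<^sub>R b I t" for t
  have "((\<lambda>t. t ^ q *\<^sub>R b I t) has_vector_derivative f' t) (at t within {0..1})" if "t \<in> {0..1}" for t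
    unfolding f'_def b_def a_def
    by (intro has_vector_derivative_scaleR has_vector_derivative_segment_eval[OF Kos_holo[OF \<omega>] U(2) z \<zeta> that]
        derivative_eq_intros) auto
  then have FTC: "(f' has_integral (1 ^ q *\<^sub>R b I 1 - 0 ^ q *\<^sub>R b I 0)) {0..1}"
    by (intro fundamental_theorem_of_calculus) auto
  have integrand: "(\<Sum>i\<in>UNIV - I. sgnK i I * (z$i - \<zeta>$i) * (\<Sum>j\<in>insert i I. sgnK j (insert i I - {j}) *
        (of_real (t ^ q) * a (insert i I - {j}) j t))) +
      (\<Sum>j\<in>I. sgnK j (I - {j}) * (of_real (t ^ (q - 1)) * (\<Sum>i\<in>UNIV - (I - {j}). sgnK i (I - {j}) *
        ((if i = j then 1 else 0) * b (insert i (I - {j})) t + of_real t * (z$i - \<zeta>$i) * a (insert i (I - {j})) j t))))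
      = f' t" for t
  proof -
    have "q \<ge> 1 \<Longrightarrow> (of_real (t ^ q) :: complex) = of_real t * of_real (t ^ (q - 1))"
      by (cases q) auto
    from koszul_homotopy_identity[where W="\<lambda>i. z$i - \<zeta>$i" and a="\<lambda>K j. a K j t" and b="\<lambda>K. b K t",
        OF this True]
    show ?thesis by (simp add: f'_def scaleR_conv_of_real)
  qed
  have "(f' has_integral dK U (Pop U \<omega>) I z \<zeta> + Pop U (dK U \<omega>) I z \<zeta>) {0..1}"
    using has_integral_add[OF dK_Pop_has_integral[OF U \<omega> z \<zeta> True] Pop_dK_has_integral[OF U \<omega> z \<zeta> True]]
    unfolding integrand[unfolded a_def b_def, symmetric] a_def b_def by simp
  then have "dK U (Pop U \<omega>) I z \<zeta> + Pop U (dK U \<omega>) I z \<zeta> = 1 ^ q *\<^sub>R b I 1 - 0 ^ q *\<^sub>R b I 0"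
    using FTC by (rule has_integral_unique)
  then show ?thesis by (simp add: b_def)
qed

lemma dK_Pop_of_cycle:
  fixes U :: "(complex^'n::{finite,linorder}) set"
  assumes U: "open U" "convex U" and \<omega>: "\<omega> \<in> Kos U q" and cycle: "dK U \<omega> = (\<lambda>I z \<zeta>. 0)"
    and z: "z \<in> U" and \<zeta>: "\<zeta> \<in> U"
  shows "dK U (Pop U \<omega>) I z \<zeta> = \<omega> I z \<zeta> - (if q = 0 then \<omega> I \<zeta> \<zeta> else 0)"
  using dK_Pop_add_Pop_dK[OF U \<omega> z \<zeta>, of I] by (simp add: cycle Pop_zero)

lemma Kos_exact:
  fixes U :: "(complex^'n::{finite,linorder}) set"
  assumes U: "open U" "convex U" and \<omega>: "\<omega> \<in> Kos U (Suc q)" and cycle: "dK U \<omega> = (\<lambda>I z \<zeta>. 0)"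
  shows "\<omega> = dK U (Pop U \<omega>)"
proof (intro ext)
  fix I z \<zeta>
  show "\<omega> I z \<zeta> = dK U (Pop U \<omega>) I z \<zeta>"
  proof (cases "z \<in> U \<and> \<zeta> \<in> U")
    case True then show ?thesis using dK_Pop_of_cycle[OF U \<omega> cycle] by simp
  qed (auto simp: dK_def Kos_outside[OF \<omega>])
qed

lemma Kos_cycle_top_degree:
  fixes U :: "(complex^'n::{finite,linorder}) set"
  assumes U: "open U" "convex U" and \<omega>: "\<omega> \<in> Kos U q" and cycle: "dK U \<omega> = (\<lambda>I z \<zeta>. 0)"
    and top: "CARD('n) \<le> q"
  shows "\<omega> = (\<lambda>I z \<zeta>. 0)"
proof -
  obtain q' where q': "q = Suc q'" using top finite_UNIV_card_ge_0[where 'a='n] by (cases q) auto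
  have "\<omega> = dK U (Pop U \<omega>)" by (rule Kos_exact[OF U \<omega>[unfolded q'] cycle])
  also have "Pop U \<omega> = (\<lambda>I z \<zeta>. 0)"
    using top by (intro Kos_above_dim[OF Pop_Kos[OF U \<omega>]]) simp
  finally show ?thesis by (simp add: dK_zero)
qed

lemma Kos_0_eq_diagonal_add_dK:
  fixes U :: "(complex^'n::{finite,linorder}) set"
  assumes U: "open U" "convex U" and \<omega>: "\<omega> \<in> Kos U 0"
  shows "\<omega> I z \<zeta> = (if I = {} \<and> z \<in> U \<and> \<zeta> \<in> U then \<omega> {} \<zeta> \<zeta> else 0) + dK U (Pop U \<omega>) I z \<zeta>"
proof (cases "z \<in> U \<and> \<zeta> \<in> U")
  case True
  then show ?thesis
    using dK_Pop_of_cycle[OF U \<omega> dK_Kos_0[OF \<omega>]] Kos_off_degree[OF \<omega>, of I] by auto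
qed (auto simp: dK_def Kos_outside[OF \<omega>])

section \<open>The bar complex\<close>

definition dup_nth :: "nat \<Rightarrow> 'a list \<Rightarrow> 'a list"
  where "dup_nth i xs = take (Suc i) xs @ drop i xs"

lemma barD_eq_dup_nth:
  "barD U q F xs = (if length xs = q + 1 \<and> set xs \<subseteq> U then \<Sum>i\<le>q. (-1) ^ i * F (dup_nth i xs) else 0)"
  unfolding barD_def dup_nth_def by (rule refl)

lemma barD_outside:
  assumes "\<not> (length xs = q + 1 \<and> set xs \<subseteq> U)" shows "barD U q F xs = 0"
  unfolding barD_def by (simp only: if_not_P[OF assms])

lemma barD_inside:
  "length xs = q + 1 \<and> set xs \<subseteq> U \<Longrightarrow> barD U q F xs = (\<Sum>i\<le>q. (-1) ^ i * F (dup_nth i xs))"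
  by (simp add: barD_eq_dup_nth)

lemma length_dup_nth: "i < length xs \<Longrightarrow> length (dup_nth i xs) = Suc (length xs)"
  by (simp add: dup_nth_def)

lemma set_dup_nth: "set (dup_nth i xs) \<subseteq> set xs"
  by (auto simp: dup_nth_def dest: in_set_takeD in_set_dropD)

lemma nth_dup_nth:
  assumes "i < length xs" "l < Suc (length xs)"
  shows "dup_nth i xs ! l = xs ! (if l \<le> i then l else l - 1)"
proof (cases "l \<le> i")
  case False
  then have "dup_nth i xs ! l = xs ! (i + (l - Suc i))"
    using assms by (simp add: dup_nth_def nth_append)
  then show ?thesis using False by simp
qed (use assms in \<open>simp add: dup_nth_def nth_append\<close>)

lemma dup_nth_dup_nth: "j \<le> i \<Longrightarrow> i < length xs \<Longrightarrow> dup_nth j (dup_nth i xs) = dup_nth (Suc i) (dup_nth j xs)"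
  by (rule nth_equalityI) (simp_all add: length_dup_nth nth_dup_nth)

lemma barD_sum: "barD U q (\<lambda>xs. \<Sum>a\<in>A. c a * H a xs) = (\<lambda>xs. \<Sum>a\<in>A. c a * barD U q (H a) xs)"
proof (rule ext)
  fix xs
  show "barD U q (\<lambda>xs. \<Sum>a\<in>A. c a * H a xs) xs = (\<Sum>a\<in>A. c a * barD U q (H a) xs)"
  proof (cases "length xs = q + 1 \<and> set xs \<subseteq> U")
    case True then show ?thesis
      by (simp add: barD_inside sum_distrib_left algebra_simps sum.swap[of _ A])
  qed (simp add: barD_outside)
qed

lemma barD_zero: "barD U q (\<lambda>xs. 0) = (\<lambda>xs. 0)"
  by (simp add: barD_def fun_eq_iff)

lemma barD_cong:
  assumes "\<And>ys. length ys = q + 2 \<Longrightarrow> set ys \<subseteq> U \<Longrightarrow> F ys = G ys"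
  shows "barD U q F = barD U q G"
proof (rule ext)
  fix xs
  show "barD U q F xs = barD U q G xs"
  proof (cases "length xs = q + 1 \<and> set xs \<subseteq> U")
    case True
    then have "F (dup_nth i xs) = G (dup_nth i xs)" if "i \<le> q" for i
      using that set_dup_nth[of i xs] by (intro assms) (auto simp: length_dup_nth)
    then show ?thesis using True by (simp add: barD_inside)
  qed (simp add: barD_outside)
qed

lemma barD_barD: "barD U q (barD U (Suc q) H) = (\<lambda>xs. 0)"
proof (rule ext)
  fix xs :: "(complex^'a) list"
  show "barD U q (barD U (Suc q) H) xs = 0"
  proof (cases "length xs = q + 1 \<and> set xs \<subseteq> U")
    case False then show ?thesis by (rule barD_outside)
  next
    case xs: True
    define g where "g p = (-1::complex) ^ (fst p + snd p) * H (dup_nth (snd p) (dup_nth (fst p) xs))" for p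
    define S1 where "S1 = {p \<in> {..q} \<times> {..Suc q}. snd p \<le> fst p}"
    define S2 where "S2 = {p \<in> {..q} \<times> {..Suc q}. fst p < snd p}"
    have "barD U (Suc q) H (dup_nth i xs) = (\<Sum>j\<le>Suc q. (-1) ^ j * H (dup_nth j (dup_nth i xs)))"
      if "i \<le> q" for i
      using xs that set_dup_nth[of i xs] by (intro barD_inside) (auto simp: length_dup_nth)
    then have "barD U q (barD U (Suc q) H) xs = (\<Sum>i\<le>q. (-1) ^ i * (\<Sum>j\<le>Suc q. (-1) ^ j * H (dup_nth j (dup_nth i xs))))"
      unfolding barD_inside[OF xs] by (intro sum.cong refl) simp
    also have "\<dots> = (\<Sum>i\<le>q. \<Sum>j\<le>Suc q. g (i, j))"
      unfolding sum_distrib_left by (intro sum.cong refl) (simp add: g_def power_add mult.assoc)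
    also have "\<dots> = sum g ({..q} \<times> {..Suc q})"
      by (rule sum.cartesian_product'[symmetric])
    also have "{..q} \<times> {..Suc q} = S1 \<union> S2" by (auto simp: S1_def S2_def)
    also have "sum g (S1 \<union> S2) = sum g S1 + sum g S2"
      by (rule sum.union_disjoint) (auto simp: S1_def S2_def)
    also have "sum g S1 = - sum g S2"
      \<comment> \<open>the simplicial identity \<open>\<partial>\<^sub>j \<partial>\<^sub>i = \<partial>\<^sub>i\<^sub>+\<^sub>1 \<partial>\<^sub>j\<close> for \<open>j \<le> i\<close> pairs the terms with opposite signs\<close>
      unfolding sum_negf[symmetric]
    proof (rule sum.reindex_bij_witness[where i="\<lambda>(a, b). (b - 1, a)" and j="\<lambda>(i, j). (j, Suc i)"])
      fix p assume p: "p \<in> S1"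
      then obtain i j where ij: "p = (i, j)" "j \<le> i" "i < length xs" using xs by (auto simp: S1_def)
      show "- g (case p of (i, j) \<Rightarrow> (j, Suc i)) = g p"
        unfolding ij using dup_nth_dup_nth[OF ij(2,3)] by (simp add: g_def add.commute)
    qed (auto simp: S1_def S2_def)
    finally show ?thesis by simp
  qed
qed

definition bar_tensor :: "(complex^'n::finite) set \<Rightarrow> nat \<Rightarrow> (nat \<Rightarrow> (complex^'n) \<Rightarrow> complex) \<Rightarrow> 'n tens"
  where "bar_tensor U q g =
    (\<lambda>xs. if length xs = q + 2 \<and> set xs \<subseteq> U then \<Prod>i<q + 2. g i (xs ! i) else 0)"

lemma bar_tensor_outside:
  assumes "\<not> (length xs = q + 2 \<and> set xs \<subseteq> U)" shows "bar_tensor U q g xs = 0"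
  unfolding bar_tensor_def by (simp only: if_not_P[OF assms])

lemma BarSpace_iff:
  "F \<in> BarSpace U q \<longleftrightarrow>
    (\<exists>(N::nat) fs. (\<forall>m<N. \<forall>i<q + 2. holo U (fs m i)) \<and> F = (\<lambda>xs. \<Sum>m<N. bar_tensor U q (fs m) xs))"
proof -
  have "(\<Sum>m<(N::nat). bar_tensor U q (fs m) xs) =
      (if length xs = q + 2 \<and> set xs \<subseteq> U then \<Sum>m<N. \<Prod>i<q + 2. fs m i (xs ! i) else 0)" for N fs xs
  proof (cases "length xs = q + 2 \<and> set xs \<subseteq> U")
    case False
    then show ?thesis by (simp only: bar_tensor_outside[OF False] if_not_P[OF False] sum.neutral_const if_False)
  qed (simp add: bar_tensor_def)
  then show ?thesis unfolding BarSpace_def by (simp add: fun_eq_iff)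
qed

lemma BarSpace_outside:
  assumes "F \<in> BarSpace U q" "\<not> (length xs = q + 2 \<and> set xs \<subseteq> U)" shows "F xs = 0"
  using assms(1) bar_tensor_outside[OF assms(2)] unfolding BarSpace_iff by auto

lemma bar_tensor_BarSpace: "(\<And>i. i < q + 2 \<Longrightarrow> holo U (g i)) \<Longrightarrow> bar_tensor U q g \<in> BarSpace U q"
  unfolding BarSpace_iff by (rule exI[of _ 1], rule exI[of _ "\<lambda>_. g"]) auto

lemma BarSpace_zero: "(\<lambda>xs. 0) \<in> BarSpace U q"
  unfolding BarSpace_iff by (rule exI[of _ 0]) auto

lemma BarSpace_scale:
  assumes "F \<in> BarSpace U q" shows "(\<lambda>xs. c * F xs) \<in> BarSpace U q"
proof -
  obtain N :: nat and fs where fs: "\<forall>m<N. \<forall>i<q + 2. holo U (fs m i)"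
    and F: "F = (\<lambda>xs. \<Sum>m<N. bar_tensor U q (fs m) xs)"
    using assms unfolding BarSpace_iff by blast
  define fs' where "fs' m i = (if i = 0 then (\<lambda>x. c * fs m 0 x) else fs m i)" for m i
  have "bar_tensor U q (fs' m) xs = c * bar_tensor U q (fs m) xs" for m xs
  proof -
    have "(\<Prod>i<q + 2. fs' m i (xs ! i)) = c * (\<Prod>i<q + 2. fs m i (xs ! i))"
      by (simp only: add_2_eq_Suc' prod.lessThan_Suc_shift) (simp add: fs'_def)
    then show ?thesis by (simp add: bar_tensor_def)
  qed
  moreover have "\<forall>m<N. \<forall>i<q + 2. holo U (fs' m i)"
    using fs by (auto simp: fs'_def intro: holo_cmult)
  ultimately show ?thesis
    unfolding BarSpace_iff F by (auto simp: sum_distrib_left intro!: exI[of _ N] exI[of _ fs'])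
qed

lemma BarSpace_add:
  assumes "F1 \<in> BarSpace U q" "F2 \<in> BarSpace U q" shows "(\<lambda>xs. F1 xs + F2 xs) \<in> BarSpace U q"
proof -
  obtain N1 :: nat and fs1 where 1: "\<forall>m<N1. \<forall>i<q + 2. holo U (fs1 m i)"
    "F1 = (\<lambda>xs. \<Sum>m<N1. bar_tensor U q (fs1 m) xs)"
    using assms(1) unfolding BarSpace_iff by blast
  obtain N2 :: nat and fs2 where 2: "\<forall>m<N2. \<forall>i<q + 2. holo U (fs2 m i)"
    "F2 = (\<lambda>xs. \<Sum>m<N2. bar_tensor U q (fs2 m) xs)"
    using assms(2) unfolding BarSpace_iff by blast
  define fs where "fs m = (if m < N1 then fs1 m else fs2 (m - N1))" for m
  have "(\<Sum>m<N1 + N2. h m) = (\<Sum>m<N1. h m) + (\<Sum>m<N2. h (N1 + m))" for h :: "nat \<Rightarrow> complex"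
    by (induction N2) (auto simp: add.assoc)
  then have "(\<lambda>xs. F1 xs + F2 xs) = (\<lambda>xs. \<Sum>m<N1 + N2. bar_tensor U q (fs m) xs)"
    unfolding 1(2) 2(2) by (simp add: fs_def)
  moreover have "\<forall>m<N1 + N2. \<forall>i<q + 2. holo U (fs m i)"
    using 1(1) 2(1) by (auto simp: fs_def)
  ultimately show ?thesis unfolding BarSpace_iff by blast
qed

lemma BarSpace_sum:
  "finite A \<Longrightarrow> (\<And>a. a \<in> A \<Longrightarrow> H a \<in> BarSpace U q) \<Longrightarrow> (\<lambda>xs. \<Sum>a\<in>A. c a * H a xs) \<in> BarSpace U q"
proof (induction A rule: finite_induct)
  case (insert a A)
  then show ?case
    using BarSpace_add[OF BarSpace_scale[of "H a" U q "c a"] insert.IH] by simp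
qed (simp add: BarSpace_zero)

definition face_index :: "nat \<Rightarrow> nat \<Rightarrow> nat"
  where "face_index i l = (if l \<le> i then l else l - 1)"

text \<open>The \<open>k\<close>-th factor of the \<open>i\<close>-th face of \<open>f\<^sub>0 \<otimes> \<dots> \<otimes> f\<^sub>p\<^sub>+\<^sub>1\<close>: the product of the
  factors that the face map sends to position \<open>k\<close> (namely \<open>f\<^sub>i f\<^sub>i\<^sub>+\<^sub>1\<close> for \<open>k = i\<close>).\<close>
definition face_factor :: "nat \<Rightarrow> (nat \<Rightarrow> 'a \<Rightarrow> complex) \<Rightarrow> nat \<Rightarrow> nat \<Rightarrow> 'a \<Rightarrow> complex"
  where "face_factor p f i k x = (\<Prod>l\<in>{l. l < Suc (Suc p) \<and> face_index i l = k}. f l x)"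

lemma prod_dup_nth:
  assumes "length xs = Suc p" "i \<le> p"
  shows "(\<Prod>l<Suc (Suc p). f l (dup_nth i xs ! l)) = (\<Prod>k<Suc p. face_factor p f i k (xs ! k))"
proof -
  have "(\<Prod>l<Suc (Suc p). f l (dup_nth i xs ! l)) = (\<Prod>l<Suc (Suc p). f l (xs ! face_index i l))"
    using assms by (intro prod.cong refl) (simp add: nth_dup_nth face_index_def)
  also have "\<dots> = (\<Prod>k<Suc p. \<Prod>l\<in>{l\<in>{..<Suc (Suc p)}. face_index i l = k}. f l (xs ! face_index i l))"
    by (rule prod.group[symmetric]) (use assms(2) in \<open>auto simp: face_index_def\<close>)
  also have "\<dots> = (\<Prod>k<Suc p. face_factor p f i k (xs ! k))"
    unfolding face_factor_def by (intro prod.cong refl) auto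
  finally show ?thesis .
qed

lemma barD_BarSpace:
  assumes "F \<in> BarSpace U (Suc q)"
  shows "barD U (Suc q) F \<in> BarSpace U q"
proof -
  obtain N :: nat and fs where fs: "\<forall>m<N. \<forall>i<Suc q + 2. holo U (fs m i)"
    and F: "F = (\<lambda>xs. \<Sum>m<N. bar_tensor U (Suc q) (fs m) xs)"
    using assms unfolding BarSpace_iff by blast
  have "bar_tensor U (Suc q) (fs m) (dup_nth i xs) = bar_tensor U q (face_factor (Suc q) (fs m) i) xs"
    if "length xs = Suc q + 1 \<and> set xs \<subseteq> U" "i \<le> Suc q" for i m xs
    using that set_dup_nth[of i xs] prod_dup_nth[of xs "Suc q" i "fs m"]
    by (auto simp: bar_tensor_def length_dup_nth)
  then have "barD U (Suc q) F =
      (\<lambda>xs. \<Sum>i\<in>{..Suc q}. (-1) ^ i * (\<Sum>m\<in>{..<N}. 1 * bar_tensor U q (face_factor (Suc q) (fs m) i) xs))"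
    by (auto simp: fun_eq_iff barD_eq_dup_nth F bar_tensor_outside)
  also have "\<dots> \<in> BarSpace U q"
    unfolding face_factor_def[abs_def] using fs
    by (intro BarSpace_sum bar_tensor_BarSpace holo_prod) auto
  finally show ?thesis .
qed

text \<open>\<open>F \<otimes> 1\<close>, the standard contracting homotopy of the bar complex.\<close>
definition tensor_one :: "(complex^'n::finite) set \<Rightarrow> nat \<Rightarrow> 'n tens \<Rightarrow> 'n tens"
  where "tensor_one U q F = (\<lambda>xs. if length xs = q + 3 \<and> set xs \<subseteq> U then F (butlast xs) else 0)"

lemma tensor_one_BarSpace:
  assumes "F \<in> BarSpace U q" shows "tensor_one U q F \<in> BarSpace U (Suc q)"
proof -
  obtain N :: nat and fs where fs: "\<forall>m<N. \<forall>i<q + 2. holo U (fs m i)"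
    and F: "F = (\<lambda>xs. \<Sum>m<N. bar_tensor U q (fs m) xs)"
    using assms unfolding BarSpace_iff by blast
  define fs' where "fs' m i = (if i < q + 2 then fs m i else (\<lambda>_. 1))" for m i
  have "bar_tensor U q (fs m) (butlast xs) = bar_tensor U (Suc q) (fs' m) xs"
    if "length xs = q + 3 \<and> set xs \<subseteq> U" for m xs
  proof -
    have "length (butlast xs) = q + 2 \<and> set (butlast xs) \<subseteq> U"
      using that by (auto dest: in_set_butlastD)
    moreover have "(\<Prod>i<q + 2. fs m i (butlast xs ! i)) = (\<Prod>i<Suc q + 2. fs' m i (xs ! i))"
      using that by (simp add: fs'_def nth_butlast)
    ultimately show ?thesis using that by (simp add: bar_tensor_def)
  qed
  then have "tensor_one U q F = (\<lambda>xs. \<Sum>m<N. bar_tensor U (Suc q) (fs' m) xs)"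
    by (auto simp: fun_eq_iff tensor_one_def F bar_tensor_outside)
  moreover have "\<forall>m<N. \<forall>i<Suc q + 2. holo U (fs' m i)" using fs by (simp add: fs'_def)
  ultimately show ?thesis unfolding BarSpace_iff by blast
qed

lemma butlast_dup_nth:
  assumes "i < length xs - 1" shows "butlast (dup_nth i xs) = dup_nth i (butlast xs)"
proof -
  have "drop i xs \<noteq> []" using assms by simp
  then have "butlast (dup_nth i xs) = take (Suc i) xs @ butlast (drop i xs)"
    unfolding dup_nth_def butlast_append by simp
  also have "\<dots> = take (Suc i) (butlast xs) @ drop i (butlast xs)"
    using assms by (simp add: take_butlast drop_butlast)
  finally show ?thesis by (simp add: dup_nth_def)
qed

lemma barD_tensor_one:
  assumes xs: "length xs = q + 2 \<and> set xs \<subseteq> U"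
  shows "barD U (Suc q) (tensor_one U q F) xs = barD U q F (butlast xs) + (-1) ^ Suc q * F xs"
proof -
  have "drop (Suc q) xs = [xs ! Suc q]" "take (Suc (Suc q)) xs = xs"
    using xs Cons_nth_drop_Suc[of "Suc q" xs] by simp_all
  then have last: "butlast (dup_nth (Suc q) xs) = xs" by (simp add: dup_nth_def)
  have "tensor_one U q F (dup_nth i xs) = F (butlast (dup_nth i xs))" if "i \<le> Suc q" for i
    using xs that set_dup_nth[of i xs] by (auto simp: tensor_one_def length_dup_nth)
  moreover have "length xs = Suc q + 1 \<and> set xs \<subseteq> U" using xs by simp
  ultimately have "barD U (Suc q) (tensor_one U q F) xs = (\<Sum>i\<le>Suc q. (-1) ^ i * F (butlast (dup_nth i xs)))"
    by (simp add: barD_inside)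
  also have "\<dots> = (\<Sum>i\<le>q. (-1) ^ i * F (dup_nth i (butlast xs))) + (-1) ^ Suc q * F xs"
    using xs by (simp add: last butlast_dup_nth)
  also have "\<dots> = barD U q F (butlast xs) + (-1) ^ Suc q * F xs"
    using xs by (simp add: barD_inside in_set_butlastD subset_iff)
  finally show ?thesis .
qed

lemma BarSpace_exact:
  assumes F: "F \<in> BarSpace U q" and cycle: "barD U q F = (\<lambda>_. 0)"
  shows "\<exists>G\<in>BarSpace U (q + 1). F = barD U (q + 1) G"
proof
  show "(\<lambda>xs. (-1) ^ Suc q * tensor_one U q F xs) \<in> BarSpace U (q + 1)"
    using BarSpace_scale[OF tensor_one_BarSpace[OF F], of "(-1) ^ Suc q"] unfolding Suc_eq_plus1 .
  have "F xs = (-1) ^ Suc q * barD U (Suc q) (tensor_one U q F) xs" for xs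
  proof (cases "length xs = q + 2 \<and> set xs \<subseteq> U")
    case True
    then show ?thesis by (simp add: barD_tensor_one cycle flip: mult.assoc power_add)
  qed (simp add: BarSpace_outside[OF F] barD_outside)
  then show "F = barD U (q + 1) (\<lambda>xs. (-1) ^ Suc q * tensor_one U q F xs)"
    using barD_sum[of U "Suc q" "\<lambda>_. (-1) ^ Suc q" "\<lambda>_. tensor_one U q F" "{()}"] by (simp add: fun_eq_iff)
qed

section \<open>The comparison map \<open>\<Phi>\<close>\<close>

abbreviation bar_slice :: "'n tens \<Rightarrow> nat \<Rightarrow> complex^'n \<Rightarrow> complex^'n \<Rightarrow> 'n tens"
  where "bar_slice F q z \<zeta> \<equiv> (\<lambda>xs. F (z # take (Suc q) (tl xs) @ [\<zeta>]))"

text \<open>\<open>1 \<otimes> f\<^sub>1 \<otimes> \<dots> \<otimes> f\<^sub>q\<^sub>+\<^sub>1 \<otimes> 1\<close>, the inner part of the tensor \<open>f\<^sub>0 \<otimes> \<dots> \<otimes> f\<^sub>q\<^sub>+\<^sub>2\<close>.\<close>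
definition inner_tensor :: "(complex^'n::finite) set \<Rightarrow> nat \<Rightarrow> (nat \<Rightarrow> (complex^'n) \<Rightarrow> complex) \<Rightarrow> 'n tens"
  where "inner_tensor U q f = bar_tensor U (Suc q) (\<lambda>i. if i = 0 \<or> i = q + 2 then (\<lambda>_. 1) else f i)"

lemma prod_lessThan_ends:
  "(\<Prod>k<Suc (Suc (Suc n)). h k) = h 0 * (\<Prod>k<Suc n. h (Suc k)) * (h (Suc (Suc n)) :: complex)"
  by (simp only: prod.lessThan_Suc[of _ "Suc (Suc n)"] prod.lessThan_Suc_shift[of _ "Suc n"])

lemma bar_tensor_slice:
  assumes L: "length L = q + 3" "set L \<subseteq> U" and z: "z \<in> U" and \<zeta>: "\<zeta> \<in> U"
  shows "bar_tensor U (Suc q) f (z # take (Suc q) (tl L) @ [\<zeta>]) = f 0 z * f (q + 2) \<zeta> * inner_tensor U q f L"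
proof -
  define M where "M = z # take (Suc q) (tl L) @ [\<zeta>]"
  have "length M = q + 3" "set M \<subseteq> U"
    using L z \<zeta> by (auto simp: M_def dest!: in_set_takeD list.set_sel(2)[rotated])
  moreover have "M ! Suc k = L ! Suc k" if "k < Suc q" for k
    using that L by (simp add: M_def nth_append nth_tl)
  moreover have "M ! 0 = z" "M ! Suc (Suc q) = \<zeta>" using L by (simp_all add: M_def nth_append)
  ultimately show ?thesis
    using L unfolding M_def[symmetric] inner_tensor_def bar_tensor_def
    by (simp add: numeral_3_eq_3 prod_lessThan_ends del: prod.lessThan_Suc)
qed

lemma barD_slice:
  assumes F: "F = (\<lambda>xs. \<Sum>m<N. bar_tensor U (Suc q) (fs m) xs)" and z: "z \<in> U" and \<zeta>: "\<zeta> \<in> U"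
  shows "barD U (Suc q) (bar_slice F q z \<zeta>) =
    (\<lambda>xs. \<Sum>m\<in>{..<N}. (fs m 0 z * fs m (q + 2) \<zeta>) * barD U (Suc q) (inner_tensor U q (fs m)) xs)"
proof -
  have "barD U (Suc q) (bar_slice F q z \<zeta>) =
      barD U (Suc q) (\<lambda>xs. \<Sum>m\<in>{..<N}. (fs m 0 z * fs m (q + 2) \<zeta>) * inner_tensor U q (fs m) xs)"
    by (rule barD_cong) (simp add: F bar_tensor_slice z \<zeta>)
  then show ?thesis by (simp add: barD_sum)
qed

lemma slice_BarSpace:
  assumes F: "F \<in> BarSpace U (Suc q)" and z: "z \<in> U" and \<zeta>: "\<zeta> \<in> U"
  shows "barD U (Suc q) (bar_slice F q z \<zeta>) \<in> BarSpace U q"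
proof -
  obtain N :: nat and fs where fs: "\<forall>m<N. \<forall>i<Suc q + 2. holo U (fs m i)"
    and FF: "F = (\<lambda>xs. \<Sum>m<N. bar_tensor U (Suc q) (fs m) xs)"
    using F unfolding BarSpace_iff by blast
  have "barD U (Suc q) (inner_tensor U q (fs m)) \<in> BarSpace U q" if "m < N" for m
    unfolding inner_tensor_def using fs that by (intro barD_BarSpace bar_tensor_BarSpace) auto
  then show ?thesis unfolding barD_slice[OF FF z \<zeta>] by (intro BarSpace_sum) auto
qed

lemma list_eq_ends:
  assumes "length K = Suc (Suc (Suc n))"
  shows "K = K ! 0 # take (Suc n) (tl K) @ [K ! Suc (Suc n)]"
proof (rule nth_equalityI)
  fix p assume "p < length K"
  then show "K ! p = (K ! 0 # take (Suc n) (tl K) @ [K ! Suc (Suc n)]) ! p"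
    using assms by (cases p) (auto simp: nth_append nth_tl less_Suc_eq)
qed (use assms in simp)

lemma barD_slice_at_ends:
  "barD U (Suc q) (bar_slice F q z \<zeta>) (z # mid @ [\<zeta>]) = barD U (Suc q) F (z # mid @ [\<zeta>])"
proof (cases "length (z # mid @ [\<zeta>]) = Suc q + 1 \<and> set (z # mid @ [\<zeta>]) \<subseteq> U")
  case True
  define L where "L = z # mid @ [\<zeta>]"
  have "dup_nth i L = z # take (Suc q) (tl (dup_nth i L)) @ [\<zeta>]" if "i \<le> Suc q" for i
  proof -
    have "length (dup_nth i L) = Suc (Suc (Suc q))" using True that by (simp add: L_def length_dup_nth)
    moreover have "dup_nth i L ! 0 = z" "dup_nth i L ! Suc (Suc q) = \<zeta>"
      using True that by (simp_all add: L_def nth_dup_nth nth_append)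
    ultimately show ?thesis using list_eq_ends by metis
  qed
  then show ?thesis using True unfolding L_def[symmetric] by (simp add: barD_inside)
qed (simp add: barD_outside)

lemma Phi_outside: "\<not> (z \<in> U \<and> \<zeta> \<in> U) \<Longrightarrow> Phi U q F I z \<zeta> = 0"
  by (cases q) auto

lemma Phi_zero: "Phi U q (\<lambda>xs. 0) = (\<lambda>I z \<zeta>. 0)"
proof (induction q)
  case (Suc q)
  then show ?case by (simp only: Phi.simps barD_zero Pop_zero) simp
qed simp

lemma Phi_at_ends:
  assumes "\<And>mid. H (z # mid @ [\<zeta>]) = H' (z # mid @ [\<zeta>])"
  shows "Phi U q H I z \<zeta> = Phi U q H' I z \<zeta>"
proof (cases q)
  case 0 then show ?thesis using assms[of "[]"] by simp
next
  case (Suc q')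
  have "bar_slice H q' z \<zeta> = bar_slice H' q' z \<zeta>" using assms by auto
  then show ?thesis using Suc by simp
qed

context
  fixes U :: "(complex^'n::{finite,linorder}) set" and q :: nat
  assumes U: "open U" "convex U"
    and Phi_q_Kos: "\<And>H. H \<in> BarSpace U q \<Longrightarrow> Phi U q H \<in> Kos U q"
    and Phi_q_sum: "\<And>(N::nat) c H. (\<forall>m<N. H m \<in> BarSpace U q) \<Longrightarrow>
      Phi U q (\<lambda>xs. \<Sum>m<N. c m * H m xs) = (\<lambda>I z \<zeta>. \<Sum>m<N. c m * Phi U q (H m) I z \<zeta>)"
begin

lemma Phi_Suc_expansion:
  fixes N :: nat
  assumes fs: "\<forall>m<N. \<forall>i<Suc q + 2. holo U (fs m i)"
    and F: "F = (\<lambda>xs. \<Sum>m<N. bar_tensor U (Suc q) (fs m) xs)"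
    and z: "z \<in> U" and \<zeta>: "\<zeta> \<in> U" and dim: "Suc q \<le> CARD('n)"
  shows "Phi U (Suc q) F J z \<zeta> = (\<Sum>m<N. (fs m 0 z * fs m (q + 2) \<zeta>) *
      Pop U (Phi U q (barD U (Suc q) (inner_tensor U q (fs m)))) J z \<zeta>)"
proof -
  have B: "barD U (Suc q) (inner_tensor U q (fs m)) \<in> BarSpace U q" if "m < N" for m
    unfolding inner_tensor_def using fs that by (intro barD_BarSpace bar_tensor_BarSpace) auto
  have "Phi U q (barD U (Suc q) (bar_slice F q z \<zeta>)) =
      (\<lambda>I z' \<zeta>'. \<Sum>m<N. (fs m 0 z * fs m (q + 2) \<zeta>) * Phi U q (barD U (Suc q) (inner_tensor U q (fs m))) I z' \<zeta>')"
    unfolding barD_slice[OF F z \<zeta>] by (rule Phi_q_sum) (use B in auto)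
  then have "Pop U (Phi U q (barD U (Suc q) (bar_slice F q z \<zeta>))) =
      Pop U (\<lambda>I z' \<zeta>'. \<Sum>m<N. (fs m 0 z * fs m (q + 2) \<zeta>) * Phi U q (barD U (Suc q) (inner_tensor U q (fs m))) I z' \<zeta>')"
    by simp
  also have "\<dots> = (\<lambda>J z' \<zeta>'. \<Sum>m<N. (fs m 0 z * fs m (q + 2) \<zeta>) *
      Pop U (Phi U q (barD U (Suc q) (inner_tensor U q (fs m)))) J z' \<zeta>')"
    by (rule Pop_sum[OF U]) (auto intro: Phi_q_Kos B)
  finally show ?thesis using z \<zeta> dim by simp
qed

lemma Phi_Suc_Kos:
  assumes F: "F \<in> BarSpace U (Suc q)"
  shows "Phi U (Suc q) F \<in> Kos U (Suc q)"
proof (cases "Suc q \<le> CARD('n)")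
  case False
  then have "Phi U (Suc q) F = (\<lambda>I z \<zeta>. 0)" by (simp add: fun_eq_iff)
  then show ?thesis using Kos_zero by simp
next
  case dim: True
  obtain N :: nat and fs where fs: "\<forall>m<N. \<forall>i<Suc q + 2. holo U (fs m i)"
    and FF: "F = (\<lambda>xs. \<Sum>m<N. bar_tensor U (Suc q) (fs m) xs)"
    using F unfolding BarSpace_iff by blast
  define Y where "Y m = Pop U (Phi U q (barD U (Suc q) (inner_tensor U q (fs m))))" for m
  have "Y m \<in> Kos U (Suc q)" if "m < N" for m
    unfolding Y_def inner_tensor_def using fs that
    by (intro Pop_Kos[OF U] Phi_q_Kos barD_BarSpace bar_tensor_BarSpace) auto
  then have "(\<lambda>I z \<zeta>. \<Sum>m<N. fs m 0 z * fs m (q + 2) \<zeta> * Y m I z \<zeta>) \<in> Kos U (Suc q)"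
    using fs by (intro Kos_module_sum) auto
  moreover have "Phi U (Suc q) F I z \<zeta> = (\<Sum>m<N. fs m 0 z * fs m (q + 2) \<zeta> * Y m I z \<zeta>)" for I z \<zeta>
  proof (cases "z \<in> U \<and> \<zeta> \<in> U")
    case True
    then show ?thesis unfolding Y_def using Phi_Suc_expansion[OF fs FF _ _ dim] by simp
  next
    case False
    then have "Y m I z \<zeta> = 0" for m unfolding Y_def Pop_def by (simp only: if_not_P[OF False] if_False)
    then show ?thesis by (simp add: Phi_outside[OF False] del: Phi.simps)
  qed
  ultimately show ?thesis by (simp add: fun_eq_iff)
qed

lemma Phi_Suc_sum:
  fixes N :: nat
  assumes H: "\<forall>m<N. H m \<in> BarSpace U (Suc q)"
  shows "Phi U (Suc q) (\<lambda>xs. \<Sum>m<N. c m * H m xs) = (\<lambda>I z \<zeta>. \<Sum>m<N. c m * Phi U (Suc q) (H m) I z \<zeta>)"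
proof (intro ext)
  fix I z \<zeta>
  show "Phi U (Suc q) (\<lambda>xs. \<Sum>m<N. c m * H m xs) I z \<zeta> = (\<Sum>m<N. c m * Phi U (Suc q) (H m) I z \<zeta>)"
  proof (cases "Suc q \<le> CARD('n) \<and> z \<in> U \<and> \<zeta> \<in> U")
    case True
    then have B: "barD U (Suc q) (bar_slice (H m) q z \<zeta>) \<in> BarSpace U q" if "m < N" for m
      using H that by (intro slice_BarSpace) auto
    have "Phi U q (barD U (Suc q) (bar_slice (\<lambda>xs. \<Sum>m<N. c m * H m xs) q z \<zeta>)) =
        (\<lambda>I z' \<zeta>'. \<Sum>m<N. c m * Phi U q (barD U (Suc q) (bar_slice (H m) q z \<zeta>)) I z' \<zeta>')"
      unfolding barD_sum by (rule Phi_q_sum) (use B in auto)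
    moreover have "Pop U (\<lambda>I z' \<zeta>'. \<Sum>m<N. c m * Phi U q (barD U (Suc q) (bar_slice (H m) q z \<zeta>)) I z' \<zeta>') =
        (\<lambda>J z' \<zeta>'. \<Sum>m<N. c m * Pop U (Phi U q (barD U (Suc q) (bar_slice (H m) q z \<zeta>))) J z' \<zeta>')"
      by (rule Pop_sum[OF U]) (auto intro: Phi_q_Kos B)
    ultimately show ?thesis using True by simp
  qed auto
qed

end

text \<open>Membership in \<open>Kos\<close> and linearity are proved together: expanding \<open>\<Phi>\<close> over the tensors
  of a bar chain needs linearity one degree lower, and \<open>Pop\<close> is linear only on holomorphic forms.\<close>
lemma Phi_Kos_and_sum:
  fixes U :: "(complex^'n::{finite,linorder}) set"
  assumes U: "open U" "convex U"
  shows "(\<forall>F\<in>BarSpace U q. Phi U q F \<in> Kos U q) \<and>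
    (\<forall>(N::nat) c H. (\<forall>m<N. H m \<in> BarSpace U q) \<longrightarrow>
      Phi U q (\<lambda>xs. \<Sum>m<N. c m * H m xs) = (\<lambda>I z \<zeta>. \<Sum>m<N. c m * Phi U q (H m) I z \<zeta>))"
proof (induction q)
  case 0
  have "Phi U 0 F \<in> Kos U 0" if F0: "F \<in> BarSpace U 0" for F
  proof -
    obtain N :: nat and fs where fs: "\<forall>m<N. \<forall>i<0 + 2. holo U (fs m i)"
      and F: "F = (\<lambda>xs. \<Sum>m<N. bar_tensor U 0 (fs m) xs)"
      using F0 unfolding BarSpace_iff by blast
    have "(\<lambda>I z \<zeta>. \<Sum>m<N. fs m 0 z * fs m 1 \<zeta> * (if I = {} \<and> z \<in> U \<and> \<zeta> \<in> U then 1 else 0)) \<in> Kos U 0"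
      using fs by (intro Kos_module_sum Kos_unit U(1)) auto
    moreover have "Phi U 0 F = (\<lambda>I z \<zeta>. \<Sum>m<N. fs m 0 z * fs m 1 \<zeta> * (if I = {} \<and> z \<in> U \<and> \<zeta> \<in> U then 1 else 0))"
      by (auto simp: fun_eq_iff F bar_tensor_def numeral_2_eq_2 lessThan_Suc mult_ac)
    ultimately show ?thesis by simp
  qed
  moreover have "Phi U 0 (\<lambda>xs. \<Sum>m<N. c m * H m xs) I z \<zeta> = (\<Sum>m<N. c m * Phi U 0 (H m) I z \<zeta>)"
    for N :: nat and c H I z \<zeta>
  proof (cases "I = {} \<and> z \<in> U \<and> \<zeta> \<in> U")
    case False
    then show ?thesis by (simp only: Phi.simps if_not_P[OF False] if_False mult_zero_right sum.neutral_const)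
  qed simp
  ultimately show ?case by blast
next
  case (Suc q)
  then show ?case using Phi_Suc_Kos[OF U] Phi_Suc_sum[OF U] by blast
qed

lemma Phi_Kos:
  fixes U :: "(complex^'n::{finite,linorder}) set"
  assumes "open U" "convex U" "F \<in> BarSpace U q"
  shows "Phi U q F \<in> Kos U q"
  using Phi_Kos_and_sum[OF assms(1,2)] assms(3) by blast

lemma Phi_chain_step:
  fixes U :: "(complex^'n::{finite,linorder}) set"
  assumes U: "open U" "convex U" and F: "F \<in> BarSpace U (Suc q)"
    and cycles: "\<And>H. barD U (Suc q) H \<in> BarSpace U q \<Longrightarrow> dK U (Phi U q (barD U (Suc q) H)) = (\<lambda>I z \<zeta>. 0)"
  shows "dK U (Phi U (Suc q) F) = Phi U q (barD U (Suc q) F)"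
proof (intro ext)
  fix I z \<zeta>
  show "dK U (Phi U (Suc q) F) I z \<zeta> = Phi U q (barD U (Suc q) F) I z \<zeta>"
  proof (cases "z \<in> U \<and> \<zeta> \<in> U")
    case False
    then show ?thesis by (simp only: dK_def if_not_P[OF False] if_False Phi_outside[OF False])
  next
    case z\<zeta>: True
    show ?thesis
    proof (cases "Suc q \<le> CARD('n)")
      case True
      define X where "X = Phi U q (barD U (Suc q) (bar_slice F q z \<zeta>))"
      have slice: "barD U (Suc q) (bar_slice F q z \<zeta>) \<in> BarSpace U q"
        using F z\<zeta> by (intro slice_BarSpace) auto
      have "dK U (Phi U (Suc q) F) I z \<zeta> = dK U (Pop U X) I z \<zeta>"
        using True z\<zeta> by (simp add: dK_def X_def)
      also have "\<dots> = X I z \<zeta> - (if q = 0 then X I \<zeta> \<zeta> else 0)"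
        unfolding X_def using z\<zeta> slice by (intro dK_Pop_of_cycle U Phi_Kos cycles) auto
      also have "(if q = 0 then X I \<zeta> \<zeta> else 0) = 0"
        \<comment> \<open>in degree 0 the diagonal value is \<open>\<partial>(1 \<otimes> f\<^sub>1 \<otimes> 1)(\<zeta>, \<zeta>) = f\<^sub>1(\<zeta>) - f\<^sub>1(\<zeta>)\<close>\<close>
        using z\<zeta> by (simp add: X_def barD_def)
      also have "X I z \<zeta> = Phi U q (barD U (Suc q) F) I z \<zeta>"
        unfolding X_def by (rule Phi_at_ends) (rule barD_slice_at_ends)
      finally show ?thesis by simp
    next
      case False
      have "Phi U q (barD U (Suc q) F) = (\<lambda>I z \<zeta>. 0)"
        using False
        by (intro Kos_cycle_top_degree[OF U Phi_Kos[OF U barD_BarSpace[OF F]] cycles[OF barD_BarSpace[OF F]]]) simp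
      then show ?thesis using False by (simp add: dK_zero)
    qed
  qed
qed

lemma Phi_chain_map:
  fixes U :: "(complex^'n::{finite,linorder}) set"
  assumes U: "open U" "convex U"
  shows "F \<in> BarSpace U (Suc q) \<Longrightarrow> dK U (Phi U (Suc q) F) = Phi U q (barD U (Suc q) F)"
proof (induction q arbitrary: F)
  case 0
  show ?case by (rule Phi_chain_step[OF U 0]) (use dK_Kos_0 Phi_Kos[OF U] in blast)
next
  case (Suc q)
  show ?case
  proof (rule Phi_chain_step[OF U Suc.prems])
    fix H assume "barD U (Suc (Suc q)) H \<in> BarSpace U (Suc q)"
    from Suc.IH[OF this] show "dK U (Phi U (Suc q) (barD U (Suc (Suc q)) H)) = (\<lambda>I z \<zeta>. 0)"
      by (simp add: barD_barD Phi_zero)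
  qed
qed

lemma barD_0_eq_zero_of_Phi_eq_dK:
  fixes U :: "(complex^'n::{finite,linorder}) set"
  assumes "Phi U 0 F = dK U \<omega>"
  shows "barD U 0 F = (\<lambda>_. 0)"
proof
  fix xs
  show "barD U 0 F xs = 0"
  proof (cases "length xs = 1 \<and> set xs \<subseteq> U")
    case True
    then obtain x where x: "xs = [x]" "x \<in> U" by (cases xs) auto
    then have "barD U 0 F xs = Phi U 0 F {} x x" by (simp add: barD_def)
    also have "\<dots> = 0" by (simp only: assms) (simp add: dK_def)
    finally show ?thesis .
  qed (simp add: barD_outside)
qed

lemma Phi_surjective_on_homology:
  fixes U :: "(complex^'n::{finite,linorder}) set"
  assumes U: "open U" "convex U" and \<omega>: "\<omega> \<in> Kos U q" and cycle: "q = 0 \<or> dK U \<omega> = (\<lambda>_ _ _. 0)"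
  shows "\<exists>F\<in>BarSpace U q. (q = 0 \<or> barD U q F = (\<lambda>_. 0)) \<and>
    (\<exists>\<eta>\<in>Kos U (q + 1). \<omega> = (\<lambda>I z \<zeta>. Phi U q F I z \<zeta> + dK U \<eta> I z \<zeta>))"
proof (cases q)
  case 0
  define F where "F = bar_tensor U 0 (\<lambda>i. if i = 0 then (\<lambda>_. 1) else (\<lambda>x. \<omega> {} x x))"
  have "F \<in> BarSpace U 0"
    unfolding F_def using holo_diagonal[OF Kos_holo[OF \<omega>]] by (intro bar_tensor_BarSpace) auto
  moreover have Phi_F: "Phi U 0 F I z \<zeta> = (if I = {} \<and> z \<in> U \<and> \<zeta> \<in> U then \<omega> {} \<zeta> \<zeta> else 0)" for I z \<zeta>
    by (simp add: F_def bar_tensor_def numeral_2_eq_2 lessThan_Suc)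
  then have "\<omega> = (\<lambda>I z \<zeta>. Phi U 0 F I z \<zeta> + dK U (Pop U \<omega>) I z \<zeta>)"
    by (intro ext) (simp only: Phi_F Kos_0_eq_diagonal_add_dK[OF U \<omega>[unfolded 0], symmetric])
  moreover have "Pop U \<omega> \<in> Kos U (q + 1)" using Pop_Kos[OF U \<omega>] by simp
  ultimately show ?thesis using 0 by blast
next
  case (Suc q')
  then have "\<omega> = dK U (Pop U \<omega>)" using Kos_exact[OF U] \<omega> cycle by simp
  then have "\<omega> = (\<lambda>I z \<zeta>. Phi U q (\<lambda>xs. 0) I z \<zeta> + dK U (Pop U \<omega>) I z \<zeta>)"
    by (simp only: Phi_zero add_0_left)
  moreover have "Pop U \<omega> \<in> Kos U (q + 1)" using Pop_Kos[OF U \<omega>] by simp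
  ultimately show ?thesis using BarSpace_zero[of U q] barD_zero[of U q] by blast
qed

theorem lemma3p3:
  fixes U :: "(complex ^ 'n::{finite,linorder}) set"
  assumes "open U" and "convex U"
  shows "(\<forall>q F. F \<in> BarSpace U q \<longrightarrow> Phi U q F \<in> Kos U q)
    \<and> (\<forall>q F. 1 \<le> q \<longrightarrow> F \<in> BarSpace U q \<longrightarrow>
          dK U (Phi U q F) = Phi U (q - 1) (barD U q F))
    \<and> (\<forall>F z. F \<in> BarSpace U 0 \<longrightarrow> z \<in> U \<longrightarrow> Phi U 0 F {} z z = F [z, z])
    \<and> (\<forall>q F. F \<in> BarSpace U q \<longrightarrow> (q = 0 \<or> barD U q F = (\<lambda>_. 0)) \<longrightarrow>
          (\<exists>\<omega>\<in>Kos U (q + 1). Phi U q F = dK U \<omega>) \<longrightarrow>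
          (\<exists>G\<in>BarSpace U (q + 1). F = barD U (q + 1) G))
    \<and> (\<forall>q \<omega>. \<omega> \<in> Kos U q \<longrightarrow> (q = 0 \<or> dK U \<omega> = (\<lambda>_ _ _. 0)) \<longrightarrow>
          (\<exists>F\<in>BarSpace U q. (q = 0 \<or> barD U q F = (\<lambda>_. 0)) \<and>
             (\<exists>\<eta>\<in>Kos U (q + 1). \<omega> = (\<lambda>I z \<zeta>. Phi U q F I z \<zeta> + dK U \<eta> I z \<zeta>))))"
proof (intro conjI allI impI)
  show "Phi U q F \<in> Kos U q" if "F \<in> BarSpace U q" for q F
    using Phi_Kos[OF assms that] .
  show "dK U (Phi U q F) = Phi U (q - 1) (barD U q F)" if "1 \<le> q" "F \<in> BarSpace U q" for q F
    using that Phi_chain_map[OF assms, of F "q - 1"] by simp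
  show "Phi U 0 F {} z z = F [z, z]" if "z \<in> U" for F z
    using that by simp
  show "\<exists>G\<in>BarSpace U (q + 1). F = barD U (q + 1) G"
    if "F \<in> BarSpace U q" "q = 0 \<or> barD U q F = (\<lambda>_. 0)" "\<exists>\<omega>\<in>Kos U (q + 1). Phi U q F = dK U \<omega>" for q F
    using that barD_0_eq_zero_of_Phi_eq_dK by (intro BarSpace_exact) auto
  show "\<exists>F\<in>BarSpace U q. (q = 0 \<or> barD U q F = (\<lambda>_. 0)) \<and>
      (\<exists>\<eta>\<in>Kos U (q + 1). \<omega> = (\<lambda>I z \<zeta>. Phi U q F I z \<zeta> + dK U \<eta> I z \<zeta>))"
    if "\<omega> \<in> Kos U q" "q = 0 \<or> dK U \<omega> = (\<lambda>_ _ _. 0)" for q \<omega>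
    using Phi_surjective_on_homology[OF assms that] .
qed

end
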